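(* For each integer $m\ge 0$, the generating function $G_m(c,t)=\sum_{n=0}^\infty w_{\mathfrak{sl}(2)}(K_{m,n})\,t^n$ can be represented as a finite linear combination $$G_m=\sum_{i=0}^{m}\frac{a_{i}(c)}{1-\left(c-\frac{i(i+1)}{2}\right)t},$$ where the coefficients $a_i(c)$ are polynomials in $c$.
   Context: A chord diagram with $n$ chords is an oriented circle with $2n$ distinct points split into $n$ pairs (chords), up to orientation-preserving diffeomorphism. $K_{m,n}$ denotes the chord diagram whose circle is the concatenation, in cyclic order, of four arcs $I_1,J_1,I_2,J_2$, with $m$ chords joining the $k$-th point of $I_1$ to the $(m+1-k)$-th point of $I_2$ ($k=1,\dots,m$) and $n$ chords joining the $k$-th point of $J_1$ to the $(n+1-k)$-th point of $J_2$ ($k=1,\dots,n$), points on each arc counted along the orientation; thus chords within each family are pairwise non-intersecting and every chord of one family intersects every chord of the other (intersection graph is the complete bipartite graph $K_{m,n}$). The $\mathfrak{sl}(2)$-weight system is defined as follows: equip $\mathfrak{sl}(2)$ with the invariant scalar product $\langle x,y\rangle=2\operatorname{tr}(xy)$, choose a basis $e_1,e_2,e_3$ and dual basis $e_i^*$; for a chord diagram $C$, cut the circle at a point not an endpoint of any chord, assign to each chord $a$ an index $i_a$, put $e_{i_a}$ at one end and $e^*_{i_a}$ at the other, multiply the $2n$ elements in $U(\mathfrak{sl}(2))$ in the order along the oriented circle, and sum over all index assignments. The result $w_{\mathfrak{sl}(2)}(C)$ lies in the center $ZU(\mathfrak{sl}(2))=\mathbb{C}[c]$, where $c$ is the Casimir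 element, equal to the value on the diagram with one chord. (With this normalization, adding a chord intersecting no other chord multiplies the value by $c$, and adding a chord intersecting exactly one other chord multiplies it by $c-1$.) *)

theory Defs
  imports Complex_Main "HOL-Computational_Algebra.Polynomial" "HOL-Library.FuncSet"
begin

text \<open>Matrices are modelled as functions nat => nat => complex; a matrix of size d
  is zero outside the index range {..<d}.\<close>

definition mmul :: "nat \<Rightarrow> (nat \<Rightarrow> nat \<Rightarrow> complex) \<Rightarrow> (nat \<Rightarrow> nat \<Rightarrow> complex) \<Rightarrow> (nat \<Rightarrow> nat \<Rightarrow> complex)" where
  "mmul d A B = (\<lambda>i j. \<Sum>l<d. A i l * B l j)"

definition mid :: "nat \<Rightarrow> (nat \<Rightarrow> nat \<Rightarrow> complex)" where
  "mid d = (\<lambda>i j. if i = j \<and> i < d then 1 else 0)"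

text \<open>The irreducible (k+1)-dimensional representation V_k of sl(2), basis v_0..v_k
  (v_j = x^(k-j) y^j): e v_j = j v_(j-1), f v_j = (k-j) v_(j+1), h v_j = (k-2j) v_j.\<close>

definition Ee :: "nat \<Rightarrow> nat \<Rightarrow> nat \<Rightarrow> complex" where
  "Ee k = (\<lambda>i j. if j = i + 1 \<and> j \<le> k then of_nat j else 0)"

definition Ff :: "nat \<Rightarrow> nat \<Rightarrow> nat \<Rightarrow> complex" where
  "Ff k = (\<lambda>i j. if i = j + 1 \<and> i \<le> k then of_nat (k - j) else 0)"

definition Hh :: "nat \<Rightarrow> nat \<Rightarrow> nat \<Rightarrow> complex" where
  "Hh k = (\<lambda>i j. if i = j \<and> i \<le> k then of_int (int k - 2 * int i) else 0)"

text \<open>Basis e_0 = e, e_1 = h, e_2 = f of sl(2) and its dual basis w.r.t. <x,y> = 2 tr(xy):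
  e^* = f/2, h^* = h/4, f^* = e/2.\<close>

definition gen :: "nat \<Rightarrow> nat \<Rightarrow> (nat \<Rightarrow> nat \<Rightarrow> complex)" where
  "gen k a = (if a = 0 then Ee k else if a = 1 then Hh k else Ff k)"

definition dualgen :: "nat \<Rightarrow> nat \<Rightarrow> (nat \<Rightarrow> nat \<Rightarrow> complex)" where
  "dualgen k a = (if a = 0 then (\<lambda>i j. Ff k i j / 2)
                  else if a = 1 then (\<lambda>i j. Hh k i j / 4)
                  else (\<lambda>i j. Ee k i j / 2))"

text \<open>A chord diagram cut at a point is a word (list of chord labels) in which every
  label occurs exactly twice.\<close>

definition chord_word :: "nat list \<Rightarrow> bool" where
  "chord_word w = (\<forall>x\<in>set w. count_list w x = 2)"

text \<open>Image in End(V_k) of the element of U(sl(2)) assigned to the chord diagram: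
  sum over index assignments, e_i at the first end, e_i^* at the second end,
  product in the order along the word.\<close>

definition ws_rep :: "nat \<Rightarrow> nat list \<Rightarrow> (nat \<Rightarrow> nat \<Rightarrow> complex)" where
  "ws_rep k w = (\<lambda>i j. \<Sum>\<sigma>\<in>PiE (set w) (\<lambda>_. {0,1,2::nat}).
      foldr (\<lambda>p M. mmul (k+1)
                (if w ! p \<in> set (take p w) then dualgen k (\<sigma> (w ! p)) else gen k (\<sigma> (w ! p))) M)
            [0..<length w] (mid (k+1)) i j)"

text \<open>Casimir eigenvalue on V_k: value of the one-chord diagram.\<close>

definition cas :: "nat \<Rightarrow> complex" where
  "cas k = ws_rep k [0, 0] 0 0"

text \<open>Since the direct sum of all V_k is a faithful U(sl(2))-module, the central element
  w_sl2(C) in C[c] is the polynomial p acting as the scalar p(cas k) on every V_k.\<close>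

definition wsl2 :: "nat list \<Rightarrow> complex poly" where
  "wsl2 w = (THE p. \<forall>k. ws_rep k w = (\<lambda>i j. if i = j \<and> i \<le> k then poly p (cas k) else 0))"

text \<open>K_{m,n}: arcs I_1, J_1, I_2, J_2; chords of the first family labelled 0..m-1,
  of the second family m..m+n-1.\<close>

definition Kmn :: "nat \<Rightarrow> nat \<Rightarrow> nat list" where
  "Kmn m n = [0..<m] @ [m..<m+n] @ rev [0..<m] @ rev [m..<m+n]"

end

theory Submission
  imports Defs "HOL-Library.Function_Algebras"
begin

text \<open>On \<open>V\<^sub>k\<close> the diagram \<open>K\<^sub>m\<^sub>,\<^sub>n\<close> acts as \<open>\<Sum>\<^sub>\<alpha> A\<^sub>\<alpha> \<Phi>\<^sup>n(A\<^sub>\<alpha>\<^sup>*)\<close>: \<open>A\<^sub>\<alpha>\<close> and \<open>A\<^sub>\<alpha>\<^sup>*\<close> are the products of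
  the basis elements and of their duals at the two ends of the first family, and
  \<open>\<Phi>(Y) = \<Sum>\<^sub>b e\<^sub>b Y e\<^sub>b\<^sup>*\<close> inserts one chord of the second family. On \<open>End V\<^sub>k\<close> one has \<open>\<Phi> = c - \<Psi>/2\<close>
  with \<open>\<Psi>\<close> the adjoint action of the Casimir. Every \<open>A\<^sub>\<alpha>\<^sup>*\<close> is a word of length \<open>m\<close>; the adjoint
  weights of such words lie in \<open>[-2m, 2m]\<close>, so a highest weight argument shows that
  \<open>\<Prod>\<^sub>i\<^sub>\<le>\<^sub>m (\<Psi> - i(i + 1))\<close> annihilates them. Lagrange interpolation splits \<open>A\<^sub>\<alpha>\<^sup>*\<close> into
  \<open>\<Psi>\<close>-eigencomponents, on which \<open>\<Phi>\<^sup>n\<close> is multiplication by \<open>(c - i(i + 1)/2)\<^sup>n\<close>. Finally, the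
  coefficient of each such power is a combination of the central elements
  \<open>\<Sum>\<^sub>\<alpha> A\<^sub>\<alpha> \<Phi>\<^sup>s \<Psi>\<^sup>r (A\<^sub>\<alpha>\<^sup>*)\<close>, and a central combination of words acts on all \<open>V\<^sub>k\<close> by one
  polynomial in \<open>c\<close>: its entries are polynomials in \<open>k\<close> invariant under \<open>k \<mapsto> -2 - k\<close>.\<close>

section \<open>Matrices\<close>

declare plus_fun_apply [simp del] zero_fun_apply [simp del]

lemmas mat_apply = plus_fun_apply zero_fun_apply minus_apply uminus_apply

type_synonym mat = "nat \<Rightarrow> nat \<Rightarrow> complex"

definition mscale :: "complex \<Rightarrow> mat \<Rightarrow> mat" where
  "mscale a Y = (\<lambda>i j. a * Y i j)"

interpretation mat: vector_space mscale
  by unfold_locales (auto simp: mscale_def fun_eq_iff mat_apply algebra_simps)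

lemma mscale_apply: "mscale a Y i j = a * Y i j"
  by (simp add: mscale_def)

lemma sum_mat_apply: "(\<Sum>x\<in>S. (f x :: mat)) i j = (\<Sum>x\<in>S. f x i j)"
  by (induction S rule: infinite_finite_induct) (auto simp: mat_apply)

abbreviation linear_mat :: "(mat \<Rightarrow> mat) \<Rightarrow> bool" where
  "linear_mat T \<equiv> module_hom mscale mscale T"

lemma linear_matI:
  assumes "\<And>A B. T (A + B) = T A + T B" and "\<And>a A. T (mscale a A) = mscale a (T A)"
  shows "linear_mat T"
  using assms by (simp add: module_hom_iff mat.module_axioms)

lemma linear_mat_funpow: "linear_mat T \<Longrightarrow> linear_mat (T ^^ n)"
  by (induction n) (simp_all add: module_hom_compose module_hom_iff mat.module_axioms)

lemma mmul_assoc: "mmul d (mmul d A B) C = mmul d A (mmul d B C)"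
  unfolding mmul_def
  by (auto simp: fun_eq_iff sum_distrib_left sum_distrib_right mult.assoc intro: sum.swap)

lemma linear_mmul_left: "linear_mat (mmul d A)"
  by (rule linear_matI)
     (auto simp: mmul_def mscale_def fun_eq_iff mat_apply distrib_left sum.distrib sum_distrib_left
        mult.left_commute)

lemma linear_mmul_right: "linear_mat (\<lambda>A. mmul d A B)"
  by (rule linear_matI)
     (auto simp: mmul_def mscale_def fun_eq_iff mat_apply distrib_right sum.distrib sum_distrib_left
        mult.assoc)

lemmas mmul_add_right = module_hom.add[OF linear_mmul_left]
  and mmul_diff_right = module_hom.diff[OF linear_mmul_left]
  and mmul_scale_right = module_hom.scale[OF linear_mmul_left]
  and mmul_zero_right = module_hom.zero[OF linear_mmul_left]
  and mmul_sum_right = module_hom.sum[OF linear_mmul_left]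
  and mmul_add_left = module_hom.add[OF linear_mmul_right]
  and mmul_diff_left = module_hom.diff[OF linear_mmul_right]
  and mmul_scale_left = module_hom.scale[OF linear_mmul_right]
  and mmul_zero_left = module_hom.zero[OF linear_mmul_right]
  and mmul_sum_left = module_hom.sum[OF linear_mmul_right]

lemmas mmul_linear = mmul_add_right mmul_diff_right mmul_scale_right mmul_zero_right
  mmul_add_left mmul_diff_left mmul_scale_left mmul_zero_left

abbreviation kmul :: "nat \<Rightarrow> mat \<Rightarrow> mat \<Rightarrow> mat" where
  "kmul k \<equiv> mmul (Suc k)"

definition endo :: "nat \<Rightarrow> mat \<Rightarrow> bool" where
  "endo k Y \<longleftrightarrow> (\<forall>i j. k < i \<or> k < j \<longrightarrow> Y i j = 0)"

lemma endo_add: "endo k A \<Longrightarrow> endo k B \<Longrightarrow> endo k (A + B)"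
  and endo_diff: "endo k A \<Longrightarrow> endo k B \<Longrightarrow> endo k (A - B)"
  and endo_scale: "endo k A \<Longrightarrow> endo k (mscale a A)"
  and endo_zero: "endo k 0"
  and endo_mmul: "endo k A \<Longrightarrow> endo k B \<Longrightarrow> endo k (kmul k A B)"
  and endo_mid: "endo k (mid (Suc k))"
  and endo_E: "endo k (Ee k)"
  and endo_F: "endo k (Ff k)"
  and endo_H: "endo k (Hh k)"
  unfolding endo_def mmul_def mscale_def mid_def Ee_def Ff_def Hh_def by (auto simp: mat_apply)

lemma endo_sum: "(\<And>x. x \<in> S \<Longrightarrow> endo k (f x)) \<Longrightarrow> endo k (\<Sum>x\<in>S. f x)"
  by (induction S rule: infinite_finite_induct) (simp_all add: endo_zero endo_add)

section \<open>The representation \<open>V\<^sub>k\<close> of \<open>sl(2)\<close>\<close>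

lemma kmul_E_left: "kmul k (Ee k) Y i j = (if i < k then of_nat (Suc i) * Y (Suc i) j else 0)"
  unfolding mmul_def Ee_def
  by (simp add: if_distrib[of "\<lambda>x. x * _"] conj_commute sum.delta' cong: if_cong)

lemma kmul_E_right: "kmul k Y (Ee k) i j = (if 0 < j \<and> j \<le> k then Y i (j - 1) * of_nat j else 0)"
  unfolding mmul_def Ee_def
  by (cases j) (auto simp: if_distrib[of "\<lambda>x. _ * x"] sum.delta' cong: if_cong)

lemma kmul_F_left:
  "kmul k (Ff k) Y i j = (if 0 < i \<and> i \<le> k then of_nat (k - (i - 1)) * Y (i - 1) j else 0)"
  unfolding mmul_def Ff_def
  by (cases i) (auto simp: if_distrib[of "\<lambda>x. x * _"] sum.delta' cong: if_cong)

lemma kmul_F_right: "kmul k Y (Ff k) i j = (if j < k then Y i (Suc j) * of_nat (k - j) else 0)"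
  unfolding mmul_def Ff_def by (auto simp: if_distrib[of "\<lambda>x. _ * x"] sum.delta' cong: if_cong)

lemma kmul_H_left: "kmul k (Hh k) Y i j = (if i \<le> k then of_int (int k - 2 * int i) * Y i j else 0)"
  unfolding mmul_def Hh_def by (auto simp: if_distrib[of "\<lambda>x. x * _"] sum.delta' cong: if_cong)

lemma kmul_H_right: "kmul k Y (Hh k) i j = (if j \<le> k then Y i j * of_int (int k - 2 * int j) else 0)"
  unfolding mmul_def Hh_def by (auto simp: if_distrib[of "\<lambda>x. _ * x"] sum.delta' cong: if_cong)

lemma kmul_mid_left: "kmul k (mid (Suc k)) Y i j = (if i \<le> k then Y i j else 0)"
  unfolding mmul_def mid_def by (auto simp: if_distrib[of "\<lambda>x. x * _"] sum.delta' cong: if_cong)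

lemma kmul_mid_right: "kmul k Y (mid (Suc k)) i j = (if j \<le> k then Y i j else 0)"
  unfolding mmul_def mid_def by (auto simp: if_distrib[of "\<lambda>x. _ * x"] sum.delta' cong: if_cong)

lemmas kmul_entries = kmul_E_left kmul_E_right kmul_F_left kmul_F_right kmul_H_left kmul_H_right
  kmul_mid_left kmul_mid_right

lemma mid_mmul: "endo k Y \<Longrightarrow> kmul k (mid (Suc k)) Y = Y"
  and mmul_mid: "endo k Y \<Longrightarrow> kmul k Y (mid (Suc k)) = Y"
  unfolding endo_def by (auto simp: fun_eq_iff kmul_mid_left kmul_mid_right)

definition mat_prod :: "nat \<Rightarrow> mat list \<Rightarrow> mat" where
  "mat_prod k Ms = foldr (kmul k) Ms (mid (Suc k))"

lemma mat_prod_Nil [simp]: "mat_prod k [] = mid (Suc k)"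
  and mat_prod_Cons [simp]: "mat_prod k (M # Ms) = kmul k M (mat_prod k Ms)"
  by (simp_all add: mat_prod_def)

lemma endo_mat_prod: "(\<And>M. M \<in> set Ms \<Longrightarrow> endo k M) \<Longrightarrow> endo k (mat_prod k Ms)"
  by (induction Ms) (auto intro: endo_mmul endo_mid)

lemma mat_prod_append:
  "(\<And>M. M \<in> set Ns \<Longrightarrow> endo k M) \<Longrightarrow> mat_prod k (Ms @ Ns) = kmul k (mat_prod k Ms) (mat_prod k Ns)"
  by (induction Ms) (auto simp: mid_mmul endo_mat_prod mmul_assoc)

lemma mat_prod_scale:
  "mat_prod k (map (\<lambda>x. mscale (c x) (M x)) xs) = mscale (\<Prod>x\<leftarrow>xs. c x) (mat_prod k (map M xs))"
  by (induction xs) (simp_all add: mmul_scale_left mmul_scale_right)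

definition bracket :: "nat \<Rightarrow> mat \<Rightarrow> mat \<Rightarrow> mat" where
  "bracket k A B = kmul k A B - kmul k B A"

lemma linear_bracket_right: "linear_mat (bracket k X)"
  by (rule linear_matI) (simp_all add: bracket_def mmul_linear mat.scale_right_diff_distrib)

lemma linear_bracket_left: "linear_mat (\<lambda>A. bracket k A X)"
  by (rule linear_matI) (simp_all add: bracket_def mmul_linear mat.scale_right_diff_distrib)

lemmas bracket_add_right = module_hom.add[OF linear_bracket_right]
  and bracket_diff_right = module_hom.diff[OF linear_bracket_right]
  and bracket_scale_right = module_hom.scale[OF linear_bracket_right]
  and bracket_zero_right = module_hom.zero[OF linear_bracket_right]
  and bracket_minus_right = module_hom.neg[OF linear_bracket_right]
  and bracket_sum_right = module_hom.sum[OF linear_bracket_right]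
  and bracket_add_left = module_hom.add[OF linear_bracket_left]
  and bracket_diff_left = module_hom.diff[OF linear_bracket_left]
  and bracket_scale_left = module_hom.scale[OF linear_bracket_left]
  and bracket_zero_left = module_hom.zero[OF linear_bracket_left]

lemmas bracket_linear = bracket_add_right bracket_diff_right bracket_scale_right bracket_zero_right
  bracket_minus_right bracket_add_left bracket_diff_left bracket_scale_left bracket_zero_left

lemma bracket_self: "bracket k X X = 0"
  by (simp add: bracket_def)

lemma bracket_antisym: "bracket k A B = - bracket k B A"
  by (simp add: bracket_def)

lemma bracket_mmul: "bracket k X (kmul k A B) = kmul k (bracket k X A) B + kmul k A (bracket k X B)"
  by (simp add: bracket_def mmul_linear mmul_assoc algebra_simps)

lemma jacobi: "bracket k X (bracket k Y Z) = bracket k (bracket k X Y) Z + bracket k Y (bracket k X Z)"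
  by (simp add: bracket_def mmul_linear mmul_assoc algebra_simps)

lemma endo_bracket: "endo k A \<Longrightarrow> endo k B \<Longrightarrow> endo k (bracket k A B)"
  unfolding bracket_def by (intro endo_diff endo_mmul)

lemma bracket_mid: "endo k X \<Longrightarrow> bracket k X (mid (Suc k)) = 0"
  by (simp add: bracket_def mid_mmul mmul_mid)

lemma bracket_E_F: "bracket k (Ee k) (Ff k) = Hh k"
  by (simp add: bracket_def fun_eq_iff kmul_entries)
     (auto simp: Ee_def Ff_def Hh_def of_nat_diff algebra_simps)

lemma bracket_H_E: "bracket k (Hh k) (Ee k) = mscale 2 (Ee k)"
  by (simp add: bracket_def fun_eq_iff mscale_def kmul_entries)
     (auto simp: Ee_def Hh_def algebra_simps)

lemma bracket_H_F: "bracket k (Hh k) (Ff k) = mscale (-2) (Ff k)"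
  by (simp add: bracket_def fun_eq_iff mscale_def kmul_entries)
     (auto simp: Ff_def Hh_def of_nat_diff algebra_simps)

lemma bracket_F_E: "bracket k (Ff k) (Ee k) = mscale (-1) (Hh k)"
  and bracket_E_H: "bracket k (Ee k) (Hh k) = mscale (-2) (Ee k)"
  and bracket_F_H: "bracket k (Ff k) (Hh k) = mscale 2 (Ff k)"
  by (subst bracket_antisym; simp add: bracket_E_F bracket_H_E bracket_H_F mat.scale_minus_left)+

lemmas sl2_relations = bracket_E_F bracket_F_E bracket_H_E bracket_E_H bracket_H_F bracket_F_H
  bracket_self

definition casimir_value :: "nat \<Rightarrow> complex" where
  "casimir_value k = of_nat k / 2 + (of_nat k)\<^sup>2 / 4"

definition dual_index :: "nat \<Rightarrow> nat" where
  "dual_index b = (if b = 0 then 2 else if b = 1 then 1 else 0)"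

definition dual_coeff :: "nat \<Rightarrow> complex" where
  "dual_coeff b = (if b = 1 then 1/4 else 1/2)"

lemma gen_simps: "gen k 0 = Ee k" "gen k (Suc 0) = Hh k" "gen k 2 = Ff k"
  by (simp_all add: gen_def)

lemma dualgen_eq: "dualgen k b = mscale (dual_coeff b) (gen k (dual_index b))"
  by (auto simp: dualgen_def gen_def dual_index_def dual_coeff_def mscale_def fun_eq_iff)

lemma endo_gen: "endo k (gen k b)"
  by (simp add: gen_def endo_E endo_F endo_H)

lemma endo_dualgen: "endo k (dualgen k b)"
  by (simp add: dualgen_eq endo_scale endo_gen)

lemma sum_three: "(\<Sum>b<3. f b) = f 0 + f (Suc 0) + f 2"
  by (simp add: numeral_3_eq_3 numeral_2_eq_2 lessThan_Suc add.commute add.left_commute)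

section \<open>The chord operator and the adjoint action of the Casimir\<close>

definition chord_map :: "nat \<Rightarrow> mat \<Rightarrow> mat" where
  "chord_map k Y = (\<Sum>b<3. kmul k (gen k b) (kmul k Y (dualgen k b)))"

text \<open>The adjoint action of the Casimir element \<open>(EF + FE)/2 + H\<^sup>2/4\<close>, with \<open>EF\<close> eliminated
  through \<open>[E, F] = H\<close>.\<close>

definition ad_casimir :: "nat \<Rightarrow> mat \<Rightarrow> mat" where
  "ad_casimir k Y = bracket k (Ff k) (bracket k (Ee k) Y) + mscale (1/2) (bracket k (Hh k) Y)
     + mscale (1/4) (bracket k (Hh k) (bracket k (Hh k) Y))"

lemma chord_map_expand:
  "chord_map k Y = kmul k (Ee k) (kmul k Y (mscale (1/2) (Ff k)))
     + kmul k (Hh k) (kmul k Y (mscale (1/4) (Hh k))) + kmul k (Ff k) (kmul k Y (mscale (1/2) (Ee k)))"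
  by (simp add: chord_map_def sum_three gen_simps dualgen_eq dual_index_def dual_coeff_def)

lemma linear_chord_map: "linear_mat (chord_map k)"
  by (rule linear_matI)
     (simp_all add: chord_map_def mmul_linear sum.distrib mat.scale_sum_right)

lemma linear_ad_casimir: "linear_mat (ad_casimir k)"
  by (rule linear_matI) (simp_all add: ad_casimir_def bracket_linear algebra_simps)

lemma endo_chord_map: "endo k Y \<Longrightarrow> endo k (chord_map k Y)"
  unfolding chord_map_def by (intro endo_sum endo_mmul endo_gen endo_dualgen)

lemma endo_ad_casimir: "endo k Y \<Longrightarrow> endo k (ad_casimir k Y)"
  unfolding ad_casimir_def
  by (intro endo_add endo_scale endo_bracket endo_E endo_F endo_H)

lemma chord_map_eq:
  assumes "endo k Y"
  shows "chord_map k Y = mscale (casimir_value k) Y - mscale (1/2) (ad_casimir k Y)"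
  using assms unfolding chord_map_expand mmul_scale_right ad_casimir_def bracket_def endo_def
  by (simp add: fun_eq_iff mat_apply mscale_def kmul_entries)
     (auto simp: casimir_value_def of_nat_diff field_simps power2_eq_square)

lemma ad_casimir_alt:
  "ad_casimir k Y = bracket k (Ee k) (bracket k (Ff k) Y) - mscale (1/2) (bracket k (Hh k) Y)
     + mscale (1/4) (bracket k (Hh k) (bracket k (Hh k) Y))"
  unfolding ad_casimir_def
  by (simp only: jacobi[of k "Ee k" "Ff k"] sl2_relations bracket_linear)
     (simp add: fun_eq_iff mat_apply mscale_def)

lemma bracket_E_ad_casimir: "bracket k (Ee k) (ad_casimir k Y) = ad_casimir k (bracket k (Ee k) Y)"
  unfolding ad_casimir_def
  by (simp only: jacobi[of k "Ee k" "Ff k"] jacobi[of k "Ee k" "Hh k"] sl2_relations bracket_linear)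
     (simp add: fun_eq_iff mat_apply mscale_def algebra_simps)

lemma bracket_F_ad_casimir: "bracket k (Ff k) (ad_casimir k Y) = ad_casimir k (bracket k (Ff k) Y)"
  unfolding ad_casimir_alt
  by (simp only: jacobi[of k "Ff k" "Ee k"] jacobi[of k "Ff k" "Hh k"] sl2_relations bracket_linear)
     (simp add: fun_eq_iff mat_apply mscale_def algebra_simps)

lemma bracket_H_ad_casimir: "bracket k (Hh k) (ad_casimir k Y) = ad_casimir k (bracket k (Hh k) Y)"
  unfolding ad_casimir_def
  by (simp only: jacobi[of k "Hh k" "Ff k"] jacobi[of k "Hh k" "Ee k"] sl2_relations bracket_linear)
     (simp add: fun_eq_iff mat_apply mscale_def algebra_simps)

lemma bracket_chord_map:
  assumes "X \<in> {Ee k, Ff k, Hh k}" and "endo k Y"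
  shows "bracket k X (chord_map k Y) = chord_map k (bracket k X Y)"
proof -
  have "endo k X" using assms(1) by (auto intro: endo_E endo_F endo_H)
  then have "endo k (bracket k X Y)" using assms(2) by (rule endo_bracket)
  moreover have "bracket k X (ad_casimir k Y) = ad_casimir k (bracket k X Y)"
    using assms(1) bracket_E_ad_casimir bracket_F_ad_casimir bracket_H_ad_casimir by auto
  ultimately show ?thesis
    using assms(2) by (simp add: chord_map_eq bracket_linear)
qed

lemma endo_chord_map_funpow: "endo k Y \<Longrightarrow> endo k ((chord_map k ^^ n) Y)"
  by (induction n) (simp_all add: endo_chord_map)

lemma bracket_chord_map_funpow:
  assumes "X \<in> {Ee k, Ff k, Hh k}" and "endo k Y"
  shows "bracket k X ((chord_map k ^^ n) Y) = (chord_map k ^^ n) (bracket k X Y)"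
  using assms(2)
proof (induction n arbitrary: Y)
  case (Suc n)
  then show ?case
    by (simp add: bracket_chord_map[OF assms(1)] endo_chord_map_funpow)
qed simp

section \<open>Weights and word spaces\<close>

text \<open>The entries on the \<open>j\<close>-th superdiagonal: the eigenspace of \<open>ad H\<close> for the eigenvalue \<open>2 j\<close>.\<close>

definition band :: "int \<Rightarrow> mat \<Rightarrow> mat" where
  "band j Y = (\<lambda>r s. if j = int s - int r then Y r s else 0)"

lemma linear_band: "linear_mat (band j)"
  by (rule linear_matI) (auto simp: band_def mscale_def fun_eq_iff mat_apply)

lemmas band_add = module_hom.add[OF linear_band]
  and band_diff = module_hom.diff[OF linear_band]
  and band_scale = module_hom.scale[OF linear_band]
  and band_sum = module_hom.sum[OF linear_band]

lemma band_band: "band i (band j Y) = (if i = j then band j Y else 0)"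
  by (auto simp: band_def fun_eq_iff mat_apply)

lemma band_mid: "band j (mscale a (mid (Suc k))) = (if j = 0 then mscale a (mid (Suc k)) else 0)"
  by (auto simp: band_def mscale_def mid_def fun_eq_iff mat_apply)

lemma band_E_left: "band j (kmul k (Ee k) Y) = kmul k (Ee k) (band (j - 1) Y)"
  and band_E_right: "band j (kmul k Y (Ee k)) = kmul k (band (j - 1) Y) (Ee k)"
  and band_F_left: "band j (kmul k (Ff k) Y) = kmul k (Ff k) (band (j + 1) Y)"
  and band_F_right: "band j (kmul k Y (Ff k)) = kmul k (band (j + 1) Y) (Ff k)"
  and band_H_left: "band j (kmul k (Hh k) Y) = kmul k (Hh k) (band j Y)"
  and band_H_right: "band j (kmul k Y (Hh k)) = kmul k (band j Y) (Hh k)"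
  by (simp_all add: band_def fun_eq_iff kmul_entries)

lemma band_bracket_E: "band j (bracket k (Ee k) Y) = bracket k (Ee k) (band (j - 1) Y)"
  and band_bracket_F: "band j (bracket k (Ff k) Y) = bracket k (Ff k) (band (j + 1) Y)"
  and band_bracket_H: "band j (bracket k (Hh k) Y) = bracket k (Hh k) (band j Y)"
  by (simp_all add: bracket_def band_diff band_E_left band_E_right band_F_left band_F_right
      band_H_left band_H_right)

lemma band_ad_casimir: "band j (ad_casimir k Y) = ad_casimir k (band j Y)"
  by (simp add: ad_casimir_def band_add band_scale band_bracket_E band_bracket_F band_bracket_H)

lemma bracket_H_band:
  assumes "endo k Y" and "band j Y = Y"
  shows "bracket k (Hh k) Y = mscale (2 * of_int j) Y"
proof (rule ext, rule ext)
  fix r s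
  have "Y r s = band j Y r s" using assms(2) by simp
  then have Y: "Y r s = (if j = int s - int r then Y r s else 0)" by (simp add: band_def)
  show "bracket k (Hh k) Y r s = mscale (2 * of_int j) Y r s"
  proof (cases "j = int s - int r")
    case True
    then have j: "(of_int j :: complex) = of_nat s - of_nat r" by simp
    show ?thesis
      using assms(1) by (auto simp: endo_def bracket_def kmul_entries mscale_def j algebra_simps)
  qed (use Y in \<open>simp add: bracket_def kmul_entries mscale_def\<close>)
qed

lemma band_decomp:
  assumes "\<And>j. int m < \<bar>j\<bar> \<Longrightarrow> band j Y = 0"
  shows "Y = (\<Sum>j\<in>{- int m..int m}. band j Y)"
proof (rule ext, rule ext)
  fix r s
  have outside: "Y r s = 0" if "int s - int r \<notin> {- int m..int m}"
  proof -
    have "int m < \<bar>int s - int r\<bar>" using that by auto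
    then have "band (int s - int r) Y r s = 0" using assms by (simp add: mat_apply)
    then show ?thesis by (simp add: band_def)
  qed
  have "(\<Sum>j\<in>{- int m..int m}. band j Y) r s
      = (\<Sum>j\<in>{- int m..int m}. if j = int s - int r then Y r s else 0)"
    by (simp add: sum_mat_apply band_def)
  also have "\<dots> = Y r s"
    using outside by (simp add: sum.delta')
  finally show "Y r s = (\<Sum>j\<in>{- int m..int m}. band j Y) r s" ..
qed

fun word_space :: "nat \<Rightarrow> nat \<Rightarrow> mat set" where
  "word_space k 0 = mat.span {mid (Suc k)}"
| "word_space k (Suc m) = {\<Sum>b<3. kmul k (gen k b) (Z b) | Z. \<forall>b<3. Z b \<in> word_space k m}"

lemma word_space_SucI:
  "(\<And>b. b < 3 \<Longrightarrow> Z b \<in> word_space k m) \<Longrightarrow> (\<Sum>b<3. kmul k (gen k b) (Z b)) \<in> word_space k (Suc m)"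
  by auto

lemma word_space_SucE:
  assumes "Y \<in> word_space k (Suc m)"
  obtains Z where "\<And>b. b < 3 \<Longrightarrow> Z b \<in> word_space k m" and "Y = (\<Sum>b<3. kmul k (gen k b) (Z b))"
  using assms by auto

declare word_space.simps(2) [simp del]

lemma subspace_word_space: "mat.subspace (word_space k m)"
proof (induction m)
  case (Suc m)
  show ?case
  proof (rule mat.subspaceI)
    show "0 \<in> word_space k (Suc m)"
      using word_space_SucI[of "\<lambda>_. 0"] Suc by (simp add: mmul_zero_right mat.subspace_0)
  next
    fix X Y assume X: "X \<in> word_space k (Suc m)" and Y: "Y \<in> word_space k (Suc m)"
    obtain Z where "\<And>b. b < 3 \<Longrightarrow> Z b \<in> word_space k m" "X = (\<Sum>b<3. kmul k (gen k b) (Z b))"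
      using X by (blast elim: word_space_SucE)
    moreover obtain Z' where "\<And>b. b < 3 \<Longrightarrow> Z' b \<in> word_space k m" "Y = (\<Sum>b<3. kmul k (gen k b) (Z' b))"
      using Y by (blast elim: word_space_SucE)
    ultimately show "X + Y \<in> word_space k (Suc m)"
      using word_space_SucI[of "\<lambda>b. Z b + Z' b"] Suc
      by (simp add: mmul_add_right sum.distrib mat.subspace_add)
  next
    fix c Y assume "Y \<in> word_space k (Suc m)"
    then obtain Z where "\<And>b. b < 3 \<Longrightarrow> Z b \<in> word_space k m" "Y = (\<Sum>b<3. kmul k (gen k b) (Z b))"
      by (blast elim: word_space_SucE)
    then show "mscale c Y \<in> word_space k (Suc m)"
      using word_space_SucI[of "\<lambda>b. mscale c (Z b)"] Suc
      by (simp add: mmul_scale_right mat.scale_sum_right mat.subspace_scale)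
  qed
qed simp

lemma endo_word_space: "Y \<in> word_space k m \<Longrightarrow> endo k Y"
proof (induction m arbitrary: Y)
  case 0
  then show ?case by (auto simp: mat.span_singleton intro: endo_scale endo_mid)
next
  case (Suc m)
  then obtain Z where "\<And>b. b < 3 \<Longrightarrow> Z b \<in> word_space k m" "Y = (\<Sum>b<3. kmul k (gen k b) (Z b))"
    by (blast elim: word_space_SucE)
  with Suc.IH show ?case by (auto intro!: endo_sum endo_mmul endo_gen)
qed

lemma word_space_gen:
  assumes "Z \<in> word_space k m" and "b < 3"
  shows "kmul k (gen k b) Z \<in> word_space k (Suc m)"
proof -
  have "(\<Sum>b'<3. kmul k (gen k b') (if b' = b then Z else 0)) = kmul k (gen k b) Z"
    using assms(2) by (simp add: if_distrib mmul_zero_right sum.delta' cong: if_cong)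
  then show ?thesis
    using word_space_SucI[of "\<lambda>b'. if b' = b then Z else 0" k m] assms(1)
    by (simp add: mat.subspace_0[OF subspace_word_space])
qed

lemma mat_prod_dualgen_in_word_space:
  "mat_prod k (map (\<lambda>x. dualgen k (\<alpha> x)) xs) \<in> word_space k (length xs)"
proof (induction xs)
  case Nil
  then show ?case by (simp add: mat.span_base)
next
  case (Cons x xs)
  have "dual_index (\<alpha> x) < 3" by (simp add: dual_index_def)
  with Cons have "kmul k (gen k (dual_index (\<alpha> x))) (mat_prod k (map (\<lambda>x. dualgen k (\<alpha> x)) xs))
      \<in> word_space k (Suc (length xs))"
    by (intro word_space_gen)
  then show ?case
    by (simp add: dualgen_eq mmul_scale_left mat.subspace_scale[OF subspace_word_space])
qed

lemma bracket_gen: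
  assumes "X \<in> {Ee k, Ff k, Hh k}" and "b < 3"
  obtains c b' where "b' < 3" and "bracket k X (gen k b) = mscale c (gen k b')"
proof -
  consider "b = 0" | "b = 1" | "b = 2" using assms(2) by linarith
  then show thesis
    using assms(1)
    by cases (auto simp: gen_def sl2_relations
        intro: that[of 0 0] that[of 0 "-2"] that[of 0 2] that[of 1 1] that[of 1 "-1"]
          that[of 2 2] that[of 2 "-2"])
qed

lemma word_space_bracket:
  assumes "X \<in> {Ee k, Ff k, Hh k}"
  shows "Y \<in> word_space k m \<Longrightarrow> bracket k X Y \<in> word_space k m"
proof (induction m arbitrary: Y)
  case 0
  have "endo k X" using assms by (auto intro: endo_E endo_F endo_H)
  with 0 show ?case
    by (auto simp: mat.span_singleton bracket_scale_right bracket_mid mat.span_zero)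
next
  case (Suc m)
  note sub = subspace_word_space[of k "Suc m"]
  from Suc.prems obtain Z where Z: "\<And>b. b < 3 \<Longrightarrow> Z b \<in> word_space k m"
    and Y: "Y = (\<Sum>b<3. kmul k (gen k b) (Z b))"
    by (blast elim: word_space_SucE)
  have terms: "kmul k (bracket k X (gen k b)) (Z b) + kmul k (gen k b) (bracket k X (Z b))
      \<in> word_space k (Suc m)" if "b < 3" for b
  proof -
    obtain c b' where "b' < 3" "bracket k X (gen k b) = mscale c (gen k b')"
      using bracket_gen[OF assms \<open>b < 3\<close>] .
    then show ?thesis
      using Z Suc.IH \<open>b < 3\<close>
      by (simp add: mmul_scale_left word_space_gen mat.subspace_add[OF sub] mat.subspace_scale[OF sub])
  qed
  show ?case
    unfolding Y bracket_sum_right bracket_mmul using terms by (intro mat.subspace_sum[OF sub]) auto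
qed

definition gen_shift :: "nat \<Rightarrow> int" where
  "gen_shift b = (if b = 0 then 1 else if b = 1 then 0 else -1)"

lemma band_gen: "b < 3 \<Longrightarrow> band j (kmul k (gen k b) Z) = kmul k (gen k b) (band (j - gen_shift b) Z)"
  by (auto simp: gen_def gen_shift_def band_E_left band_F_left band_H_left)

lemma word_space_band: "Y \<in> word_space k m \<Longrightarrow> band j Y \<in> word_space k m"
proof (induction m arbitrary: Y j)
  case 0
  then obtain c where "Y = mscale c (mid (Suc k))" by (auto simp: mat.span_singleton)
  then show ?case by (simp add: band_mid mat.span_zero mat.span_scale mat.span_base)
next
  case (Suc m)
  from Suc.prems obtain Z where Z: "\<And>b. b < 3 \<Longrightarrow> Z b \<in> word_space k m"
    and Y: "Y = (\<Sum>b<3. kmul k (gen k b) (Z b))"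
    by (blast elim: word_space_SucE)
  have "band j Y = (\<Sum>b<3. kmul k (gen k b) (band (j - gen_shift b) (Z b)))"
    unfolding Y band_sum by (intro sum.cong) (auto simp: band_gen)
  then show ?case using Z Suc.IH by (simp add: word_space_SucI)
qed

lemma band_word_space_eq_0: "Y \<in> word_space k m \<Longrightarrow> int m < \<bar>j\<bar> \<Longrightarrow> band j Y = 0"
proof (induction m arbitrary: Y j)
  case 0
  then show ?case by (auto simp: mat.span_singleton band_mid)
next
  case (Suc m)
  from Suc.prems(1) obtain Z where Z: "\<And>b. b < 3 \<Longrightarrow> Z b \<in> word_space k m"
    and Y: "Y = (\<Sum>b<3. kmul k (gen k b) (Z b))"
    by (blast elim: word_space_SucE)
  have "band (j - gen_shift b) (Z b) = 0" if "b < 3" for b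
    using Suc.IH[OF Z[OF that]] Suc.prems(2) by (auto simp: gen_shift_def)
  then show ?case
    unfolding Y band_sum by (simp add: band_gen mmul_zero_right)
qed

section \<open>Spectral decomposition of the adjoint Casimir on word spaces\<close>

definition op_poly :: "complex poly \<Rightarrow> (mat \<Rightarrow> mat) \<Rightarrow> mat \<Rightarrow> mat" where
  "op_poly p T Y = (\<Sum>r\<le>degree p. mscale (coeff p r) ((T ^^ r) Y))"

lemma op_poly_bound:
  assumes "degree p < N"
  shows "op_poly p T Y = (\<Sum>r<N. mscale (coeff p r) ((T ^^ r) Y))"
  unfolding op_poly_def
  by (rule sum.mono_neutral_left) (use assms in \<open>auto simp: coeff_eq_0\<close>)

lemma op_poly_add: "op_poly (p + q) T Y = op_poly p T Y + op_poly q T Y"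
proof -
  define N where "N = Suc (max (degree p) (degree q))"
  have "degree (p + q) < N" unfolding N_def using degree_add_le_max[of p q] by linarith
  then show ?thesis
    by (subst (1 2 3) op_poly_bound[where N = N])
       (auto simp: N_def mat.scale_left_distrib sum.distrib)
qed

lemma op_poly_smult: "op_poly (smult a p) T Y = mscale a (op_poly p T Y)"
proof -
  have "degree (smult a p) < Suc (degree p)" using degree_smult_le[of a p] by linarith
  then show ?thesis
    by (subst (1 2) op_poly_bound[where N = "Suc (degree p)"])
       (auto simp: mat.scale_sum_right simp del: sum.lessThan_Suc)
qed

lemma op_poly_zero: "op_poly 0 T Y = 0"
  and op_poly_one: "op_poly 1 T Y = Y"
  by (simp_all add: op_poly_def)

lemma op_poly_sum: "op_poly (\<Sum>x\<in>S. f x) T Y = (\<Sum>x\<in>S. op_poly (f x) T Y)"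
  by (induction S rule: infinite_finite_induct) (simp_all add: op_poly_zero op_poly_add)

lemma linear_op_poly: "linear_mat T \<Longrightarrow> linear_mat (op_poly p T)"
  unfolding op_poly_def
  by (rule linear_matI)
     (simp_all add: module_hom.add[OF linear_mat_funpow] module_hom.scale[OF linear_mat_funpow]
        mat.scale_right_distrib sum.distrib mat.scale_sum_right mult.commute)

lemma op_poly_pCons:
  assumes "linear_mat T"
  shows "op_poly (pCons a p) T Y = mscale a Y + T (op_poly p T Y)"
proof -
  define N where "N = Suc (degree p)"
  have "degree (pCons a p) < Suc N" by (simp add: N_def degree_pCons_le le_imp_less_Suc)
  then have "op_poly (pCons a p) T Y = mscale a Y + (\<Sum>r<N. mscale (coeff p r) ((T ^^ Suc r) Y))"
    by (simp add: op_poly_bound sum.lessThan_Suc_shift del: sum.lessThan_Suc)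
  also have "(\<Sum>r<N. mscale (coeff p r) ((T ^^ Suc r) Y)) = T (op_poly p T Y)"
    by (simp add: op_poly_def N_def lessThan_Suc_atMost module_hom.sum[OF assms]
        module_hom.scale[OF assms])
  finally show ?thesis .
qed

lemma op_poly_linear_factor: "linear_mat T \<Longrightarrow> op_poly [:- a, 1:] T Y = T Y - mscale a Y"
  by (simp add: op_poly_pCons op_poly_zero module_hom.zero mat.scale_minus_left)

lemma op_poly_mult:
  assumes "linear_mat T"
  shows "op_poly (p * q) T Y = op_poly p T (op_poly q T Y)"
proof (induction p)
  case (pCons a p)
  have "op_poly (pCons a p * q) T Y = op_poly (smult a q + pCons 0 (p * q)) T Y"
    by simp
  also have "\<dots> = mscale a (op_poly q T Y) + T (op_poly p T (op_poly q T Y))"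
    by (simp add: op_poly_add op_poly_smult op_poly_pCons[OF assms] pCons.IH)
  finally show ?case
    by (simp add: op_poly_pCons[OF assms])
qed (simp add: op_poly_zero)

lemma op_poly_commute:
  assumes "linear_mat S" and "\<And>Y. S (T Y) = T (S Y)"
  shows "S (op_poly p T Y) = op_poly p T (S Y)"
proof -
  have "S ((T ^^ r) Y) = (T ^^ r) (S Y)" for r
    by (induction r) (simp_all add: assms(2))
  then show ?thesis
    by (simp add: op_poly_def module_hom.sum[OF assms(1)] module_hom.scale[OF assms(1)])
qed

lemma op_poly_invariant:
  assumes "mat.subspace V" and "\<And>Y. Y \<in> V \<Longrightarrow> T Y \<in> V" and "Y \<in> V"
  shows "op_poly p T Y \<in> V"
proof -
  have "(T ^^ r) Y \<in> V" for r
    by (induction r) (simp_all add: assms(2,3))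
  then show ?thesis
    unfolding op_poly_def by (intro mat.subspace_sum[OF assms(1)] mat.subspace_scale[OF assms(1)])
qed

lemma subspace_endo: "mat.subspace (Collect (endo k))"
  by (rule mat.subspaceI) (simp_all add: endo_zero endo_add endo_scale)

lemma endo_op_poly_ad_casimir: "endo k Y \<Longrightarrow> endo k (op_poly p (ad_casimir k) Y)"
  using op_poly_invariant[OF subspace_endo, where T = "ad_casimir k"] by (simp add: endo_ad_casimir)

lemma band_op_poly_ad_casimir:
  "band j (op_poly p (ad_casimir k) Y) = op_poly p (ad_casimir k) (band j Y)"
  by (rule op_poly_commute) (simp_all add: linear_band band_ad_casimir)

lemma bracket_op_poly_ad_casimir:
  assumes "X \<in> {Ee k, Ff k, Hh k}"
  shows "bracket k X (op_poly p (ad_casimir k) Y) = op_poly p (ad_casimir k) (bracket k X Y)"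
  by (rule op_poly_commute)
     (use assms in \<open>auto simp: linear_bracket_right bracket_E_ad_casimir bracket_F_ad_casimir
        bracket_H_ad_casimir\<close>)

definition adj_eig :: "nat \<Rightarrow> complex" where
  "adj_eig i = of_nat (i * (i + 1))"

lemma inj_adj_eig: "inj adj_eig"
proof (rule injI)
  fix i j assume "adj_eig i = adj_eig j"
  then have "i * (i + 1) = j * (j + 1)" by (simp only: adj_eig_def of_nat_eq_iff)
  moreover have "strict_mono (\<lambda>i::nat. i * (i + 1))"
  proof (rule strict_monoI)
    fix x y :: nat assume "x < y"
    then show "x * (x + 1) < y * (y + 1)" by (intro mult_strict_mono) auto
  qed
  ultimately show "i = j" by (metis strict_mono_eq)
qed

text \<open>A matrix of \<open>ad H\<close>-weight \<open>2 j\<close> killed by \<open>ad E\<close> (resp. of weight \<open>-2 j\<close> killed by \<open>ad F\<close>)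
  is a highest (resp. lowest) weight vector of the adjoint action, so it lies in a copy of
  \<open>V\<^sub>2\<^sub>j\<close>, on which the Casimir acts by \<open>j (j + 1)\<close>.\<close>

lemma ad_casimir_highest_weight:
  assumes "endo k Z" and "band (int j) Z = Z" and "bracket k (Ee k) Z = 0"
  shows "ad_casimir k Z = mscale (adj_eig j) Z"
  using assms(3) bracket_H_band[OF assms(1,2)]
  by (simp add: ad_casimir_def bracket_linear)
     (simp add: fun_eq_iff mscale_def mat_apply adj_eig_def algebra_simps)

lemma ad_casimir_lowest_weight:
  assumes "endo k Z" and "band (- int j) Z = Z" and "bracket k (Ff k) Z = 0"
  shows "ad_casimir k Z = mscale (adj_eig j) Z"
  using assms(3) bracket_H_band[OF assms(1,2)]
  by (simp add: ad_casimir_alt bracket_linear)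
     (simp add: fun_eq_iff mscale_def mat_apply adj_eig_def algebra_simps)

definition eig_prod :: "nat \<Rightarrow> nat \<Rightarrow> complex poly" where
  "eig_prod j m = (\<Prod>i\<in>{j..m}. [:- adj_eig i, 1:])"

lemma eig_prod_Suc: "j \<le> m \<Longrightarrow> eig_prod j m = [:- adj_eig j, 1:] * eig_prod (Suc j) m"
  unfolding eig_prod_def by (simp add: Icc_eq_insert_lb_nat)

lemma eig_prod_split: "j \<le> Suc m \<Longrightarrow> eig_prod 0 m = (\<Prod>i<j. [:- adj_eig i, 1:]) * eig_prod j m"
  unfolding eig_prod_def atLeast0AtMost[symmetric]
  by (subst prod.union_disjoint[symmetric]) (auto intro: prod.cong)

lemmas op_poly_ad_casimir_zero = module_hom.zero[OF linear_op_poly[OF linear_ad_casimir]]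

text \<open>Downward induction on the weight: \<open>[E, Y]\<close> has weight \<open>j + 1\<close>, so by induction the factors
  beyond \<open>j\<close> turn \<open>Y\<close> into a highest weight vector of weight \<open>j\<close>.\<close>

lemma eig_prod_kills_highest:
  assumes "j \<le> Suc m"
  shows "Y \<in> word_space k m \<Longrightarrow> band (int j) Y = Y \<Longrightarrow> op_poly (eig_prod j m) (ad_casimir k) Y = 0"
  using assms
proof (induction j arbitrary: Y rule: inc_induct)
  case base
  then have "Y = 0" using band_word_space_eq_0[of Y k m "int (Suc m)"] by simp
  then show ?case by (simp add: op_poly_ad_casimir_zero)
next
  case (step j)
  define Z where "Z = op_poly (eig_prod (Suc j) m) (ad_casimir k) Y"
  have "bracket k (Ee k) Z = op_poly (eig_prod (Suc j) m) (ad_casimir k) (bracket k (Ee k) Y)"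
    by (simp add: Z_def bracket_op_poly_ad_casimir)
  also have "\<dots> = 0"
    using step.prems by (intro step.IH word_space_bracket) (auto simp: band_bracket_E)
  finally have "ad_casimir k Z = mscale (adj_eig j) Z"
    using step.prems
    by (intro ad_casimir_highest_weight)
       (auto simp: Z_def band_op_poly_ad_casimir endo_op_poly_ad_casimir endo_word_space)
  moreover have "op_poly (eig_prod j m) (ad_casimir k) Y = op_poly [:- adj_eig j, 1:] (ad_casimir k) Z"
    using step.hyps unfolding Z_def by (simp only: eig_prod_Suc op_poly_mult[OF linear_ad_casimir])
  ultimately show ?case
    by (simp add: op_poly_linear_factor[OF linear_ad_casimir])
qed

lemma eig_prod_kills_lowest:
  assumes "j \<le> Suc m"
  shows "Y \<in> word_space k m \<Longrightarrow> band (- int j) Y = Y \<Longrightarrow> op_poly (eig_prod j m) (ad_casimir k) Y = 0"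
  using assms
proof (induction j arbitrary: Y rule: inc_induct)
  case base
  then have "Y = 0" using band_word_space_eq_0[of Y k m "- int (Suc m)"] by simp
  then show ?case by (simp add: op_poly_ad_casimir_zero)
next
  case (step j)
  define Z where "Z = op_poly (eig_prod (Suc j) m) (ad_casimir k) Y"
  have "bracket k (Ff k) Z = op_poly (eig_prod (Suc j) m) (ad_casimir k) (bracket k (Ff k) Y)"
    by (simp add: Z_def bracket_op_poly_ad_casimir)
  also have "\<dots> = 0"
    using step.prems by (intro step.IH word_space_bracket) (auto simp: band_bracket_F)
  finally have "ad_casimir k Z = mscale (adj_eig j) Z"
    using step.prems
    by (intro ad_casimir_lowest_weight)
       (auto simp: Z_def band_op_poly_ad_casimir endo_op_poly_ad_casimir endo_word_space)
  moreover have "op_poly (eig_prod j m) (ad_casimir k) Y = op_poly [:- adj_eig j, 1:] (ad_casimir k) Z"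
    using step.hyps unfolding Z_def by (simp only: eig_prod_Suc op_poly_mult[OF linear_ad_casimir])
  ultimately show ?case
    by (simp add: op_poly_linear_factor[OF linear_ad_casimir])
qed

lemma eig_prod_annihilates:
  assumes "Y \<in> word_space k m"
  shows "op_poly (eig_prod 0 m) (ad_casimir k) Y = 0"
proof -
  have "op_poly (eig_prod 0 m) (ad_casimir k) (band j Y) = 0" if "\<bar>j\<bar> \<le> int m" for j
  proof -
    define n where "n = nat \<bar>j\<bar>"
    have n: "n \<le> Suc m" "j = int n \<or> j = - int n" using that by (auto simp: n_def)
    have "op_poly (eig_prod n m) (ad_casimir k) (band j Y) = 0"
      using n(2) word_space_band[OF assms]
      by (auto simp: band_band intro: eig_prod_kills_highest[OF n(1)] eig_prod_kills_lowest[OF n(1)])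
    then show ?thesis
      by (simp add: eig_prod_split[OF n(1)] op_poly_mult[OF linear_ad_casimir] op_poly_ad_casimir_zero)
  qed
  moreover have "Y = (\<Sum>j\<in>{- int m..int m}. band j Y)"
    by (intro band_decomp band_word_space_eq_0[OF assms])
  then have "op_poly (eig_prod 0 m) (ad_casimir k) Y
      = (\<Sum>j\<in>{- int m..int m}. op_poly (eig_prod 0 m) (ad_casimir k) (band j Y))"
    by (metis module_hom.sum[OF linear_op_poly[OF linear_ad_casimir]])
  ultimately show ?thesis
    by (simp add: abs_le_iff)
qed

definition lagrange_basis :: "(nat \<Rightarrow> 'a::field) \<Rightarrow> nat \<Rightarrow> nat \<Rightarrow> 'a poly" where
  "lagrange_basis x m i = smult (1 / (\<Prod>j\<in>{..m} - {i}. x i - x j)) (\<Prod>j\<in>{..m} - {i}. [:- x j, 1:])"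

lemma degree_lagrange_basis:
  assumes "i \<le> m"
  shows "degree (lagrange_basis x m i) \<le> m"
proof -
  have "degree (\<Prod>j\<in>{..m} - {i}. [:- x j, 1:]) \<le> (\<Sum>j\<in>{..m} - {i}. 1)"
    using degree_prod_sum_le[of "{..m} - {i}" "\<lambda>j. [:- x j, 1:]"] by simp
  also have "\<dots> = m" using assms by simp
  finally show ?thesis
    unfolding lagrange_basis_def using degree_smult_le order_trans by blast
qed

lemma poly_lagrange_basis:
  assumes "inj_on x {..m}" and "i \<le> m" and "t \<le> m"
  shows "poly (lagrange_basis x m i) (x t) = (if t = i then 1 else 0)"
proof (cases "t = i")
  case True
  have "(\<Prod>j\<in>{..m} - {i}. x i - x j) \<noteq> 0"
    using assms(1,2) by (auto dest: inj_onD)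
  then show ?thesis using True by (simp add: lagrange_basis_def poly_prod)
next
  case False
  then have "(\<Prod>j\<in>{..m} - {i}. poly [:- x j, 1:] (x t)) = 0"
    using assms(3) by (intro prod_zero) auto
  then show ?thesis using False by (simp add: lagrange_basis_def poly_prod)
qed

lemma sum_lagrange_basis:
  assumes "inj_on x {..m}"
  shows "(\<Sum>i\<le>m. lagrange_basis x m i) = 1"
proof (rule poly_eqI_degree[where A = "x ` {..m}"])
  fix y assume "y \<in> x ` {..m}"
  then obtain t where t: "t \<le> m" "y = x t" by auto
  then show "poly (\<Sum>i\<le>m. lagrange_basis x m i) y = poly 1 y"
    using assms by (simp add: poly_sum poly_lagrange_basis if_distrib cong: if_cong)
next
  have "card (x ` {..m}) = Suc m" using assms by (simp add: card_image)
  moreover have "degree (\<Sum>i\<le>m. lagrange_basis x m i) \<le> m"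
    by (intro degree_sum_le degree_lagrange_basis) auto
  ultimately show "degree (\<Sum>i\<le>m. lagrange_basis x m i) < card (x ` {..m})"
    and "degree (1 :: 'a poly) < card (x ` {..m})"
    by auto
qed

lemma linear_factor_mult_lagrange_basis:
  assumes "i \<le> m"
  shows "[:- x i, 1:] * lagrange_basis x m i
    = smult (1 / (\<Prod>j\<in>{..m} - {i}. x i - x j)) (\<Prod>j\<le>m. [:- x j, 1:])"
  using assms by (simp add: lagrange_basis_def prod.remove[of "{..m}" i] mult_smult_right)

definition spectral_component :: "nat \<Rightarrow> nat \<Rightarrow> nat \<Rightarrow> mat \<Rightarrow> mat" where
  "spectral_component k m i = op_poly (lagrange_basis adj_eig m i) (ad_casimir k)"

lemma sum_spectral_component: "(\<Sum>i\<le>m. spectral_component k m i Y) = Y"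
  using sum_lagrange_basis[of adj_eig m] inj_adj_eig
  by (simp add: spectral_component_def op_poly_sum[symmetric] op_poly_one inj_on_subset)

lemma ad_casimir_spectral_component:
  assumes "Y \<in> word_space k m" and "i \<le> m"
  shows "ad_casimir k (spectral_component k m i Y) = mscale (adj_eig i) (spectral_component k m i Y)"
proof -
  have "op_poly [:- adj_eig i, 1:] (ad_casimir k) (spectral_component k m i Y)
      = op_poly ([:- adj_eig i, 1:] * lagrange_basis adj_eig m i) (ad_casimir k) Y"
    by (simp only: spectral_component_def op_poly_mult[OF linear_ad_casimir])
  also have "\<dots> = 0"
    using eig_prod_annihilates[OF assms(1)]
    unfolding linear_factor_mult_lagrange_basis[OF assms(2)]
    by (simp add: op_poly_smult eig_prod_def atLeast0AtMost)
  finally show ?thesis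
    by (simp add: op_poly_linear_factor[OF linear_ad_casimir])
qed

lemma chord_map_funpow_eigen:
  assumes "endo k Z" and "ad_casimir k Z = mscale a Z"
  shows "(chord_map k ^^ n) Z = mscale ((casimir_value k - a / 2) ^ n) Z"
proof (induction n)
  case (Suc n)
  have "chord_map k Z = mscale (casimir_value k - a / 2) Z"
    using assms by (simp add: chord_map_eq fun_eq_iff mscale_def algebra_simps)
  then show ?case
    using Suc by (simp add: module_hom.scale[OF linear_chord_map] mult.commute)
qed simp

lemma chord_map_funpow_spectral:
  assumes "Y \<in> word_space k m"
  shows "(chord_map k ^^ n) Y
    = (\<Sum>i\<le>m. mscale ((casimir_value k - adj_eig i / 2) ^ n) (spectral_component k m i Y))"
proof -
  have "(chord_map k ^^ n) Y = (\<Sum>i\<le>m. (chord_map k ^^ n) (spectral_component k m i Y))"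
    by (metis sum_spectral_component module_hom.sum[OF linear_mat_funpow[OF linear_chord_map]])
  also have "\<dots> = (\<Sum>i\<le>m. mscale ((casimir_value k - adj_eig i / 2) ^ n) (spectral_component k m i Y))"
    using assms
    by (intro sum.cong refl chord_map_funpow_eigen ad_casimir_spectral_component)
       (auto simp: spectral_component_def endo_op_poly_ad_casimir endo_word_space)
  finally show ?thesis .
qed

section \<open>The diagrams \<open>K\<^sub>m\<^sub>,\<^sub>n\<close>\<close>

lemma sum_PiE_insert:
  assumes "x \<notin> S"
  shows "(\<Sum>\<sigma>\<in>PiE (insert x S) T. f \<sigma>) = (\<Sum>b\<in>T x. \<Sum>\<sigma>\<in>PiE S T. f (\<sigma>(x := b)))"
proof -
  have "(\<Sum>\<sigma>\<in>PiE (insert x S) T. f \<sigma>) = (\<Sum>(b, \<sigma>)\<in>T x \<times> PiE S T. f (\<sigma>(x := b)))"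
    unfolding PiE_insert_eq
    by (subst sum.reindex[OF inj_combinator[OF assms]]) (simp add: split_def)
  then show ?thesis by (simp add: sum.cartesian_product)
qed

lemma sum_PiE_union:
  assumes "X \<inter> Y = {}"
  shows "(\<Sum>\<sigma>\<in>PiE (X \<union> Y) T. f \<sigma>)
    = (\<Sum>\<alpha>\<in>PiE X T. \<Sum>\<beta>\<in>PiE Y T. f (\<lambda>i. if i \<in> X then \<alpha> i else \<beta> i))"
proof -
  have "(\<Sum>\<sigma>\<in>PiE (X \<union> Y) T. f \<sigma>) = (\<Sum>(\<alpha>, \<beta>)\<in>PiE X T \<times> PiE Y T. f (\<lambda>i. if i \<in> X then \<alpha> i else \<beta> i))"
    by (rule sum.reindex_bij_witness[where i = "\<lambda>(\<alpha>, \<beta>) i. if i \<in> X then \<alpha> i else \<beta> i"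
          and j = "\<lambda>\<sigma>. (restrict \<sigma> X, restrict \<sigma> Y)"])
       (use assms in \<open>auto simp: PiE_def extensional_def fun_eq_iff intro!: arg_cong[where f = f]\<close>)
  then show ?thesis by (simp add: sum.cartesian_product)
qed

lemma chord_word_letters:
  assumes "distinct zs" and "set ts \<subseteq> set zs"
  shows "map (\<lambda>p. if (zs @ ts) ! p \<in> set (take p (zs @ ts)) then D ((zs @ ts) ! p) else G ((zs @ ts) ! p))
      [0..<length (zs @ ts)] = map G zs @ map D ts"
proof (rule nth_equalityI)
  fix p assume "p < length (map (\<lambda>p. if (zs @ ts) ! p \<in> set (take p (zs @ ts))
      then D ((zs @ ts) ! p) else G ((zs @ ts) ! p)) [0..<length (zs @ ts)])"
  then have p: "p < length zs + length ts" by simp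
  show "map (\<lambda>p. if (zs @ ts) ! p \<in> set (take p (zs @ ts)) then D ((zs @ ts) ! p) else G ((zs @ ts) ! p))
      [0..<length (zs @ ts)] ! p = (map G zs @ map D ts) ! p"
  proof (cases "p < length zs")
    case True
    then have "zs ! p \<in> set (drop p zs)"
      by (metis Cons_nth_drop_Suc list.set_intros(1))
    then have "zs ! p \<notin> set (take p zs)"
      using set_take_disj_set_drop_if_distinct[OF assms(1), of p p] by blast
    then show ?thesis using True p by (simp add: nth_append)
  next
    case False
    then have "ts ! (p - length zs) \<in> set (take p (zs @ ts))"
      using p assms(2) by auto
    then show ?thesis using False p by (simp add: nth_append)
  qed
qed simp

definition gen_word :: "nat \<Rightarrow> (nat \<Rightarrow> nat) \<Rightarrow> nat list \<Rightarrow> mat" where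
  "gen_word k \<alpha> xs = mat_prod k (map (\<lambda>x. gen k (\<alpha> x)) xs)"

definition dual_word :: "nat \<Rightarrow> (nat \<Rightarrow> nat) \<Rightarrow> nat list \<Rightarrow> mat" where
  "dual_word k \<alpha> xs = mat_prod k (map (\<lambda>x. dualgen k (\<alpha> x)) (rev xs))"

lemma endo_dual_word: "endo k (dual_word k \<alpha> xs)"
  by (auto simp: dual_word_def intro!: endo_mat_prod endo_dualgen)

lemma gen_word_cong: "(\<And>x. x \<in> set xs \<Longrightarrow> \<alpha> x = \<beta> x) \<Longrightarrow> gen_word k \<alpha> xs = gen_word k \<beta> xs"
  and dual_word_cong: "(\<And>x. x \<in> set xs \<Longrightarrow> \<alpha> x = \<beta> x) \<Longrightarrow> dual_word k \<alpha> xs = dual_word k \<beta> xs"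
  unfolding gen_word_def dual_word_def by (intro arg_cong[where f = "mat_prod k"] map_cong; simp)+

lemma gen_word_Cons: "gen_word k \<alpha> (x # xs) = kmul k (gen k (\<alpha> x)) (gen_word k \<alpha> xs)"
  by (simp add: gen_word_def)

lemma dual_word_Cons: "dual_word k \<alpha> (x # xs) = kmul k (dual_word k \<alpha> xs) (dualgen k (\<alpha> x))"
  by (simp add: dual_word_def) (subst mat_prod_append; simp add: endo_dualgen mmul_mid)

lemma dual_word_in_word_space: "dual_word k \<alpha> xs \<in> word_space k (length xs)"
  using mat_prod_dualgen_in_word_space[of k \<alpha> "rev xs"] by (simp add: dual_word_def)

lemma chord_map_funpow_as_sum:
  assumes "distinct ys" and "endo k Y"
  shows "(\<Sum>\<beta>\<in>PiE (set ys) (\<lambda>_. {0, 1, 2}). kmul k (gen_word k \<beta> ys) (kmul k Y (dual_word k \<beta> ys)))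
    = (chord_map k ^^ length ys) Y"
  using assms(1)
proof (induction ys)
  case Nil
  then show ?case by (simp add: gen_word_def dual_word_def mid_mmul mmul_mid assms(2) endo_mid)
next
  case (Cons y ys)
  have y: "y \<notin> set ys" using Cons.prems by simp
  have word: "kmul k (gen_word k (\<beta>(y := b)) (y # ys)) (kmul k Y (dual_word k (\<beta>(y := b)) (y # ys)))
      = kmul k (gen k b) (kmul k (kmul k (gen_word k \<beta> ys) (kmul k Y (dual_word k \<beta> ys))) (dualgen k b))"
    for \<beta> b
  proof -
    have "gen_word k (\<beta>(y := b)) ys = gen_word k \<beta> ys" "dual_word k (\<beta>(y := b)) ys = dual_word k \<beta> ys"
      using y by (auto intro: gen_word_cong dual_word_cong)
    then show ?thesis by (simp add: gen_word_Cons dual_word_Cons mmul_assoc)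
  qed
  have "(\<Sum>\<beta>\<in>PiE (set (y # ys)) (\<lambda>_. {0, 1, 2}).
        kmul k (gen_word k \<beta> (y # ys)) (kmul k Y (dual_word k \<beta> (y # ys))))
      = (\<Sum>b<3. kmul k (gen k b) (kmul k (\<Sum>\<beta>\<in>PiE (set ys) (\<lambda>_. {0, 1, 2}).
          kmul k (gen_word k \<beta> ys) (kmul k Y (dual_word k \<beta> ys))) (dualgen k b)))"
    by (simp add: sum_PiE_insert[OF y] word mmul_sum_left mmul_sum_right lessThan_nat_numeral
        insert_commute)
  also have "\<dots> = chord_map k ((chord_map k ^^ length ys) Y)"
    unfolding chord_map_def[of k "(chord_map k ^^ length ys) Y"] using Cons by simp
  finally show ?case by simp
qed

lemma foldr_mmul_eq_mat_prod: "foldr (\<lambda>p M. mmul (k + 1) (X p) M) xs (mid (k + 1)) = mat_prod k (map X xs)"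
  by (induction xs) auto

lemma ws_rep_Kmn_expand:
  "ws_rep k (Kmn m n) = (\<Sum>\<sigma>\<in>PiE {0..<m + n} (\<lambda>_. {0, 1, 2}). mat_prod k
      (map (\<lambda>x. gen k (\<sigma> x)) ([0..<m] @ [m..<m + n]) @ map (\<lambda>x. dualgen k (\<sigma> x)) (rev [0..<m] @ rev [m..<m + n])))"
proof -
  have K: "Kmn m n = ([0..<m] @ [m..<m + n]) @ (rev [0..<m] @ rev [m..<m + n])"
    by (simp add: Kmn_def)
  have set_K: "set (Kmn m n) = {0..<m + n}" by (auto simp: Kmn_def)
  show ?thesis
    unfolding ws_rep_def set_K unfolding foldr_mmul_eq_mat_prod K
    by (subst chord_word_letters) (auto simp: fun_eq_iff sum_mat_apply)
qed

text \<open>The parallel chords of the second family are nested around the ends of the first family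
  lying on \<open>I\<^sub>2\<close>, so each of them contributes one application of \<open>chord_map\<close>.\<close>

lemma ws_rep_Kmn:
  "ws_rep k (Kmn m n) = (\<Sum>\<alpha>\<in>PiE {0..<m} (\<lambda>_. {0, 1, 2}).
      kmul k (gen_word k \<alpha> [0..<m]) ((chord_map k ^^ n) (dual_word k \<alpha> [0..<m])))"
proof -
  let ?I = "[0..<m]" and ?J = "[m..<m + n]" and ?T = "\<lambda>_::nat. {0, 1, 2::nat}"
  have split: "mat_prod k (map (\<lambda>x. gen k (\<sigma> x)) (?I @ ?J) @ map (\<lambda>x. dualgen k (\<sigma> x)) (rev ?I @ rev ?J))
      = kmul k (gen_word k \<sigma> ?I) (kmul k (gen_word k \<sigma> ?J) (kmul k (dual_word k \<sigma> ?I) (dual_word k \<sigma> ?J)))"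
    for \<sigma>
    unfolding gen_word_def dual_word_def map_append append_assoc
    by (subst mat_prod_append, force simp: endo_gen endo_dualgen)+ (rule refl)
  have "ws_rep k (Kmn m n) = (\<Sum>\<sigma>\<in>PiE ({0..<m} \<union> {m..<m + n}) ?T.
      kmul k (gen_word k \<sigma> ?I) (kmul k (gen_word k \<sigma> ?J) (kmul k (dual_word k \<sigma> ?I) (dual_word k \<sigma> ?J))))"
    unfolding ws_rep_Kmn_expand split by (simp add: ivl_disj_un_two(3))
  also have "\<dots> = (\<Sum>\<alpha>\<in>PiE {0..<m} ?T. \<Sum>\<beta>\<in>PiE {m..<m + n} ?T.
      kmul k (gen_word k \<alpha> ?I) (kmul k (gen_word k \<beta> ?J) (kmul k (dual_word k \<alpha> ?I) (dual_word k \<beta> ?J))))"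
    by (subst sum_PiE_union)
       (auto intro!: sum.cong arg_cong2[where f = "kmul k"] gen_word_cong dual_word_cong)
  also have "\<dots> = (\<Sum>\<alpha>\<in>PiE {0..<m} ?T. kmul k (gen_word k \<alpha> ?I) ((chord_map k ^^ n) (dual_word k \<alpha> ?I)))"
    using chord_map_funpow_as_sum[of ?J k] by (simp add: mmul_sum_right[symmetric] endo_dual_word)
  finally show ?thesis .
qed

section \<open>Centrality\<close>

definition bilinear_mat :: "(mat \<Rightarrow> mat \<Rightarrow> mat) \<Rightarrow> bool" where
  "bilinear_mat \<beta> \<longleftrightarrow> (\<forall>V. linear_mat (\<lambda>U. \<beta> U V)) \<and> (\<forall>U. linear_mat (\<beta> U))"

lemma bilinear_matI:
  assumes "\<And>U U' V. \<beta> (U + U') V = \<beta> U V + \<beta> U' V" and "\<And>a U V. \<beta> (mscale a U) V = mscale a (\<beta> U V)"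
    and "\<And>U V V'. \<beta> U (V + V') = \<beta> U V + \<beta> U V'" and "\<And>a U V. \<beta> U (mscale a V) = mscale a (\<beta> U V)"
  shows "bilinear_mat \<beta>"
  using assms by (simp add: bilinear_mat_def linear_matI)

lemma bilinear_matD:
  assumes "bilinear_mat \<beta>"
  shows "\<beta> (U + U') V = \<beta> U V + \<beta> U' V" "\<beta> (mscale a U) V = mscale a (\<beta> U V)"
    "\<beta> (- U) V = - \<beta> U V" "\<beta> 0 V = 0"
    "\<beta> U (V + V') = \<beta> U V + \<beta> U V'" "\<beta> U (mscale a V) = mscale a (\<beta> U V)"
    "\<beta> U (- V) = - \<beta> U V" "\<beta> U 0 = 0"
proof -
  from assms have L: "\<And>V. linear_mat (\<lambda>U. \<beta> U V)" and R: "\<And>U. linear_mat (\<beta> U)"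
    by (simp_all add: bilinear_mat_def)
  show "\<beta> (U + U') V = \<beta> U V + \<beta> U' V" "\<beta> (mscale a U) V = mscale a (\<beta> U V)"
    "\<beta> (- U) V = - \<beta> U V" "\<beta> 0 V = 0"
    by (simp_all add: module_hom.add[OF L] module_hom.scale[OF L] module_hom.neg[OF L] module_hom.zero[OF L])
  show "\<beta> U (V + V') = \<beta> U V + \<beta> U V'" "\<beta> U (mscale a V) = mscale a (\<beta> U V)"
    "\<beta> U (- V) = - \<beta> U V" "\<beta> U 0 = 0"
    by (simp_all add: module_hom.add[OF R] module_hom.scale[OF R] module_hom.neg[OF R] module_hom.zero[OF R])
qed

lemma bilinear_mat_insert_chord:
  assumes "bilinear_mat \<beta>"
  shows "bilinear_mat (\<lambda>U V. \<Sum>b<3. \<beta> (kmul k (gen k b) U) (kmul k V (dualgen k b)))"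
  by (rule bilinear_matI)
     (simp_all add: bilinear_matD[OF assms] mmul_linear sum.distrib mat.scale_sum_right)

lemma casimir_tensor_invariant:
  assumes "bilinear_mat \<beta>" and "X \<in> {Ee k, Ff k, Hh k}"
  shows "(\<Sum>b<3. \<beta> (bracket k X (gen k b)) (dualgen k b) + \<beta> (gen k b) (bracket k X (dualgen k b))) = 0"
proof -
  from assms(2) consider "X = Ee k" | "X = Ff k" | "X = Hh k" by blast
  then show ?thesis
    by cases
      (simp_all add: sum_three gen_simps dualgen_eq dual_index_def dual_coeff_def bracket_linear
        sl2_relations bilinear_matD[OF assms(1)])
qed

lemma word_tensor_invariant:
  assumes "X \<in> {Ee k, Ff k, Hh k}"
  shows "distinct xs \<Longrightarrow> bilinear_mat \<beta> \<Longrightarrow>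
    (\<Sum>\<alpha>\<in>PiE (set xs) (\<lambda>_. {0, 1, 2}). \<beta> (bracket k X (gen_word k \<alpha> xs)) (dual_word k \<alpha> xs)
      + \<beta> (gen_word k \<alpha> xs) (bracket k X (dual_word k \<alpha> xs))) = 0"
proof (induction xs arbitrary: \<beta>)
  case Nil
  have "endo k X" using assms by (auto intro: endo_E endo_F endo_H)
  then show ?case by (simp add: gen_word_def dual_word_def bracket_mid bilinear_matD[OF Nil(2)])
next
  case (Cons x xs)
  have x: "x \<notin> set xs" using Cons.prems(1) by simp
  note \<beta> = bilinear_matD[OF Cons.prems(2)]
  define outer where "outer \<alpha> b =
      \<beta> (kmul k (bracket k X (gen k b)) (gen_word k \<alpha> xs)) (kmul k (dual_word k \<alpha> xs) (dualgen k b))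
    + \<beta> (kmul k (gen k b) (gen_word k \<alpha> xs)) (kmul k (dual_word k \<alpha> xs) (bracket k X (dualgen k b)))"
    for \<alpha> b
  define inner where "inner \<alpha> b =
      \<beta> (kmul k (gen k b) (bracket k X (gen_word k \<alpha> xs))) (kmul k (dual_word k \<alpha> xs) (dualgen k b))
    + \<beta> (kmul k (gen k b) (gen_word k \<alpha> xs)) (kmul k (bracket k X (dual_word k \<alpha> xs)) (dualgen k b))"
    for \<alpha> b
  have split: "\<beta> (bracket k X (gen_word k (\<alpha>(x := b)) (x # xs))) (dual_word k (\<alpha>(x := b)) (x # xs))
      + \<beta> (gen_word k (\<alpha>(x := b)) (x # xs)) (bracket k X (dual_word k (\<alpha>(x := b)) (x # xs)))
    = outer \<alpha> b + inner \<alpha> b" for \<alpha> b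
  proof -
    have "gen_word k (\<alpha>(x := b)) xs = gen_word k \<alpha> xs" "dual_word k (\<alpha>(x := b)) xs = dual_word k \<alpha> xs"
      using x by (auto intro: gen_word_cong dual_word_cong)
    then show ?thesis
      by (simp add: outer_def inner_def gen_word_Cons dual_word_Cons bracket_mmul \<beta> algebra_simps)
  qed
  have outer: "(\<Sum>b<3. outer \<alpha> b) = 0" for \<alpha>
    unfolding outer_def
    by (rule casimir_tensor_invariant[OF _ assms]) (rule bilinear_matI, simp_all add: \<beta> mmul_linear)
  have inner: "(\<Sum>\<alpha>\<in>PiE (set xs) (\<lambda>_. {0, 1, 2}). \<Sum>b<3. inner \<alpha> b) = 0"
    using Cons.IH[OF _ bilinear_mat_insert_chord[OF Cons.prems(2)]] Cons.prems(1)
    by (simp add: inner_def sum.distrib)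
  have three: "{0, 1, 2} = {..<3::nat}" by auto
  have "(\<Sum>b\<in>{0, 1, 2}. \<Sum>\<alpha>\<in>PiE (set xs) (\<lambda>_. {0, 1, 2}). outer \<alpha> b + inner \<alpha> b) = 0"
    unfolding sum.distrib
    by (subst (1 2) sum.swap) (simp only: three outer inner[unfolded three] sum.neutral_const add_0)
  then show ?case
    unfolding set_simps sum_PiE_insert[OF x] split .
qed

lemma bracket_ws_rep_Kmn:
  assumes "X \<in> {Ee k, Ff k, Hh k}"
  shows "bracket k X (ws_rep k (Kmn m n)) = 0"
proof -
  define \<beta> where "\<beta> U V = kmul k U ((chord_map k ^^ n) V)" for U V
  note lin = linear_mat_funpow[OF linear_chord_map]
  have "bilinear_mat \<beta>"
    by (rule bilinear_matI)
       (simp_all add: \<beta>_def mmul_linear module_hom.add[OF lin] module_hom.scale[OF lin])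
  have "bracket k X (ws_rep k (Kmn m n)) = (\<Sum>\<alpha>\<in>PiE (set [0..<m]) (\<lambda>_. {0, 1, 2}).
      \<beta> (bracket k X (gen_word k \<alpha> [0..<m])) (dual_word k \<alpha> [0..<m])
      + \<beta> (gen_word k \<alpha> [0..<m]) (bracket k X (dual_word k \<alpha> [0..<m])))"
    using assms
    by (simp add: ws_rep_Kmn \<beta>_def bracket_sum_right bracket_mmul bracket_chord_map_funpow
        endo_dual_word)
  also have "\<dots> = 0"
    by (rule word_tensor_invariant[OF assms]) (simp_all add: \<open>bilinear_mat \<beta>\<close>)
  finally show ?thesis .
qed

lemma scalar_if_commutes_E_H:
  assumes "endo k U" and "bracket k (Hh k) U = 0" and "bracket k (Ee k) U = 0"
  shows "U = mscale (U 0 0) (mid (Suc k))"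
proof -
  have diag: "U i j = 0" if "i \<noteq> j" for i j
  proof (cases "i \<le> k \<and> j \<le> k")
    case True
    have "bracket k (Hh k) U i j = 0" using assms(2) by (simp add: mat_apply)
    then have "(of_int (int k - 2 * int i) - of_int (int k - 2 * int j)) * U i j = (0::complex)"
      using True by (simp add: bracket_def kmul_entries algebra_simps)
    then show ?thesis using that by simp
  qed (use assms(1) in \<open>auto simp: endo_def\<close>)
  have step: "U (Suc i) (Suc i) = U i i" if "i < k" for i
  proof -
    have "bracket k (Ee k) U i (Suc i) = 0" using assms(3) by (simp add: mat_apply)
    then have "of_nat (Suc i) * (U (Suc i) (Suc i) - U i i) = (0::complex)"
      using that by (simp add: bracket_def kmul_entries algebra_simps)
    then show ?thesis by (simp only: mult_eq_0_iff of_nat_eq_0_iff) simp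
  qed
  have const: "U i i = U 0 0" if "i \<le> k" for i
    using that by (induction i) (auto simp: step)
  show ?thesis
  proof (rule ext, rule ext)
    fix i j
    show "U i j = mscale (U 0 0) (mid (Suc k)) i j"
      using diag[of i j] const[of i] assms(1) by (auto simp: endo_def mscale_def mid_def)
  qed
qed

section \<open>Central elements act by polynomials in the Casimir\<close>

text \<open>Entry \<open>(i, j)\<close> of the product of the word \<open>W\<close> in the infinite tridiagonal matrices whose row
  \<open>i\<close> carries \<open>e i\<close> at column \<open>i + 1\<close>, \<open>h i\<close> on the diagonal and \<open>f i\<close> at column \<open>i - 1\<close>.\<close>

fun ladder_entry :: "(nat \<Rightarrow> 'a::comm_ring_1) \<Rightarrow> (nat \<Rightarrow> 'a) \<Rightarrow> (nat \<Rightarrow> 'a) \<Rightarrow> nat list \<Rightarrow> nat \<Rightarrow> nat \<Rightarrow> 'a"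
  where
    "ladder_entry e f h [] i j = (if i = j then 1 else 0)"
  | "ladder_entry e f h (b # W) i j =
      (if b = 0 then e i * ladder_entry e f h W (Suc i) j
       else if b = 1 then h i * ladder_entry e f h W i j
       else if i = 0 then 0 else f i * ladder_entry e f h W (i - 1) j)"

lemma poly_ladder_entry:
  "poly (ladder_entry e f h W i j) z
    = ladder_entry (\<lambda>i. poly (e i) z) (\<lambda>i. poly (f i) z) (\<lambda>i. poly (h i) z) W i j"
  by (induction W arbitrary: i) auto

text \<open>Conjugating by a diagonal matrix rescales the off-diagonal coefficients.\<close>

lemma ladder_entry_similar:
  fixes e e' f f' :: "nat \<Rightarrow> 'a::field"
  assumes "\<And>i. e' i * f' (Suc i) = e i * f (Suc i)" and "\<And>i. e' i \<noteq> 0"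
  defines "d \<equiv> \<lambda>i. \<Prod>l<i. e l / e' l"
  shows "ladder_entry e' f' h W i j * d j = d i * ladder_entry e f h W i j"
proof (induction W arbitrary: i)
  case (Cons b W)
  have d_Suc: "d (Suc l) = d l * e l / e' l" for l by (simp add: d_def)
  show ?case
  proof (cases "b = 0 \<or> b = 1 \<or> i = 0")
    case True
    then show ?thesis
      using Cons[of "Suc i"] Cons[of i] assms(2)[of i]
      by (auto simp: d_Suc field_simps)
  next
    case False
    then obtain l where l: "i = Suc l" by (cases i) auto
    have "f' (Suc l) = e l * f (Suc l) / e' l" using assms(1,2)[of l] by (simp add: field_simps)
    then show ?thesis
      using False Cons[of l] by (simp add: l d_Suc field_simps)
  qed
qed simp

definition verma_entry :: "'a::comm_ring_1 \<Rightarrow> nat list \<Rightarrow> nat \<Rightarrow> nat \<Rightarrow> 'a" where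
  "verma_entry x = ladder_entry (\<lambda>i. of_nat (Suc i)) (\<lambda>i. x - of_nat (i - 1)) (\<lambda>i. x - 2 * of_nat i)"

lemma poly_verma_entry: "poly (verma_entry [:0, 1:] W i j) z = verma_entry z W i j"
  by (simp add: verma_entry_def poly_ladder_entry of_nat_poly mult.commute)

lemma verma_entry_below_block:
  "k < i \<Longrightarrow> j \<le> k \<Longrightarrow> verma_entry (of_nat k) W i j = 0"
proof (induction W arbitrary: i)
  case (Cons b W)
  then show ?case
    by (cases "i = Suc k") (auto simp: verma_entry_def)
qed (simp add: verma_entry_def)

lemma mat_prod_gen_entry:
  "mat_prod k (map (gen k) W) i j = (if i \<le> k \<and> j \<le> k then verma_entry (of_nat k) W i j else 0)"
proof (induction W arbitrary: i)
  case (Cons b W)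
  then show ?case
    using verma_entry_below_block[of k "Suc i" j W]
    by (auto simp: gen_def kmul_entries verma_entry_def of_nat_diff)
qed (simp add: verma_entry_def mid_def)

lemma verma_entry_shift:
  "verma_entry (of_nat k) W (Suc k + i) (Suc k + j)
    = ladder_entry (\<lambda>i. of_nat (k + 2 + i)) (\<lambda>i. - of_nat i) (\<lambda>i. of_nat k - 2 * of_nat (Suc k + i)) W i j"
proof (induction W arbitrary: i)
  case (Cons b W)
  show ?case
  proof (cases "b = 0 \<or> b = 1 \<or> i = 0")
    case True
    then show ?thesis using Cons[of "Suc i"] Cons[of i] by (auto simp: verma_entry_def)
  next
    case False
    then obtain l where "i = Suc l" by (cases i) auto
    then show ?thesis using False Cons[of l] by (simp add: verma_entry_def of_nat_diff)
  qed
qed (simp add: verma_entry_def)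

text \<open>The Verma module of highest weight \<open>k\<close> contains the one of highest weight \<open>-k - 2\<close>, spanned by
  the basis vectors from index \<open>k + 1\<close> on.\<close>

lemma verma_entry_reflect:
  "verma_entry (of_nat k :: 'a::field_char_0) W (Suc k) (Suc k) = verma_entry (- of_nat k - 2) W 0 0"
proof -
  let ?e' = "\<lambda>i. of_nat (k + 2 + i) :: 'a" and ?f' = "\<lambda>i. - of_nat i :: 'a"
    and ?e = "\<lambda>i. of_nat (Suc i) :: 'a" and ?f = "\<lambda>i. (- of_nat k - 2) - of_nat (i - 1) :: 'a"
    and ?h = "\<lambda>i. (- of_nat k - 2) - 2 * of_nat i :: 'a"
  have h: "(\<lambda>i. of_nat k - 2 * of_nat (Suc k + i) :: 'a) = ?h"
    by (simp add: fun_eq_iff algebra_simps)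
  have edge: "?e' i * ?f' (Suc i) = ?e i * ?f (Suc i)" for i
    by (simp add: algebra_simps)
  have nonzero: "?e' i \<noteq> 0" for i
    by (simp only: of_nat_eq_0_iff)
  have "verma_entry (of_nat k :: 'a) W (Suc k) (Suc k) = ladder_entry ?e' ?f' ?h W 0 0"
    using verma_entry_shift[of k W 0 0, where 'a = 'a] by (simp only: h add_0_right)
  also have "\<dots> = ladder_entry ?e ?f ?h W 0 0"
    using ladder_entry_similar[of ?e' ?f' ?e ?f, OF edge nonzero, of ?h W 0 0] by simp
  also have "\<dots> = verma_entry (- of_nat k - 2) W 0 0"
    by (simp add: verma_entry_def)
  finally show ?thesis .
qed

lemma even_poly_eq_poly_square:
  fixes Q :: "'a::{field_char_0} poly"
  assumes "\<And>y. poly Q (- y) = poly Q y"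
  shows "poly Q y = poly (\<Sum>i\<le>degree Q. monom (coeff Q (2 * i)) i) (y\<^sup>2)"
proof -
  have "pcompose Q [:0, -1:] = Q"
    by (rule poly_eq_poly_eq_iff[THEN iffD1]) (simp add: fun_eq_iff poly_pcompose assms)
  then have "(-1) ^ i * coeff Q i = coeff Q i" for i
    by (metis coeff_pcompose_linear)
  from this[of "Suc (2 * _)"] have odd: "coeff Q (Suc (2 * i)) = 0" for i
    by simp
  have "poly Q y = (\<Sum>i\<le>Suc (2 * degree Q). coeff Q i * y ^ i)"
    unfolding poly_altdef by (rule sum.mono_neutral_left) (auto simp: coeff_eq_0)
  also have "\<dots> = (\<Sum>i\<le>degree Q. coeff Q (2 * i) * (y\<^sup>2) ^ i)"
    by (subst sum.in_pairs_0) (simp add: odd power_mult)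
  also have "\<dots> = poly (\<Sum>i\<le>degree Q. monom (coeff Q (2 * i)) i) (y\<^sup>2)"
    by (simp add: poly_sum poly_monom)
  finally show ?thesis .
qed

text \<open>\<open>x/2 + x\<^sup>2/4\<close> is the Casimir value on \<open>V\<^sub>x\<close>; a polynomial invariant under \<open>x \<mapsto> -2 - x\<close> is a
  polynomial in it because \<open>(x + 1)\<^sup>2 = 1 + 4 (x/2 + x\<^sup>2/4)\<close>.\<close>

lemma symmetric_poly_casimir:
  fixes P :: "'a::{field_char_0} poly"
  assumes "\<And>x. poly P (- 2 - x) = poly P x"
  obtains q where "\<And>x. poly P x = poly q (x / 2 + x\<^sup>2 / 4)"
proof
  define Q where "Q = pcompose P [:-1, 1:]"
  define R where "R = (\<Sum>i\<le>degree Q. monom (coeff Q (2 * i)) i)"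
  have Q: "poly Q y = poly P (y - 1)" for y by (simp add: Q_def poly_pcompose)
  have "poly Q (- y) = poly Q y" for y
  proof -
    have e: "- 2 - (y - 1) = - y - 1" by simp
    show ?thesis using assms[of "y - 1"] unfolding Q e .
  qed
  then have "poly Q y = poly R (y\<^sup>2)" for y
    unfolding R_def by (rule even_poly_eq_poly_square)
  then show "poly P x = poly (pcompose R [:1, 4:]) (x / 2 + x\<^sup>2 / 4)" for x
    using Q[of "x + 1"] by (simp add: poly_pcompose power2_eq_square algebra_simps)
qed

lemma poly_eq_if_infinite_agree:
  fixes p q :: "'a::idom poly"
  assumes "infinite A" and "\<And>x. x \<in> A \<Longrightarrow> poly p x = poly q x"
  shows "p = q"
proof (rule ccontr)
  assume "p \<noteq> q"
  then have "finite {x. poly (p - q) x = 0}" by (intro poly_roots_finite) simp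
  moreover have "A \<subseteq> {x. poly (p - q) x = 0}" using assms(2) by auto
  ultimately show False using assms(1) finite_subset by blast
qed

lemma poly_eqI_nat_tail:
  fixes p q :: "'a::{idom, ring_char_0} poly"
  assumes "\<And>k. j \<le> k \<Longrightarrow> poly p (of_nat k) = poly q (of_nat k)"
  shows "p = q"
proof (rule poly_eq_if_infinite_agree)
  show "infinite ((of_nat :: nat \<Rightarrow> 'a) ` {j..})"
    using finite_imageD[OF _ inj_on_subset[OF inj_of_nat]] infinite_Ici by blast
qed (use assms in auto)

definition acts_by_casimir_poly :: "(nat \<Rightarrow> mat) \<Rightarrow> bool" where
  "acts_by_casimir_poly U \<longleftrightarrow> (\<exists>q. \<forall>k. U k = mscale (poly q (casimir_value k)) (mid (Suc k)))"

lemma word_combination_entry: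
  "(\<Sum>s\<in>S. mscale (c s) (mat_prod k (map (gen k) (w s)))) i j
    = (if i \<le> k \<and> j \<le> k then poly (\<Sum>s\<in>S. smult (c s) (verma_entry [:0, 1:] (w s) i j)) (of_nat k) else 0)"
proof -
  have if_out: "(\<Sum>s\<in>S. c s * (if b then f s else 0)) = (if b then \<Sum>s\<in>S. c s * f s else 0)" for b f
    by (cases b) simp_all
  show ?thesis
    by (simp add: sum_mat_apply mscale_apply mat_prod_gen_entry if_out poly_sum poly_verma_entry)
qed

text \<open>The entries of \<open>U k\<close> are polynomials in \<open>k\<close>; by centrality the diagonal ones coincide, and
  reading the diagonal entry at index \<open>k + 1\<close> in the Verma module of weight \<open>k\<close> shows that this
  polynomial is invariant under \<open>k \<mapsto> -2 - k\<close>.\<close>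

lemma central_word_combination:
  assumes U: "\<And>k. U k = (\<Sum>s\<in>S. mscale (c s) (mat_prod k (map (gen k) (w s))))"
    and H: "\<And>k. bracket k (Hh k) (U k) = 0" and E: "\<And>k. bracket k (Ee k) (U k) = 0"
  shows "acts_by_casimir_poly U"
proof -
  define P where "P i j = (\<Sum>s\<in>S. smult (c s) (verma_entry [:0, 1:] (w s) i j))" for i j
  have entry: "U k i j = (if i \<le> k \<and> j \<le> k then poly (P i j) (of_nat k) else 0)" for k i j
    unfolding P_def U by (rule word_combination_entry)
  have "endo k (U k)" for k
    by (simp add: endo_def entry)
  then have scalar: "U k = mscale (U k 0 0) (mid (Suc k))" for k
    by (rule scalar_if_commutes_E_H[OF _ H E])
  have diag: "P j j = P 0 0" for j
  proof (rule poly_eqI_nat_tail)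
    fix k assume "j \<le> k"
    then show "poly (P j j) (of_nat k) = poly (P 0 0) (of_nat k)"
      using entry[of k j j] entry[of k 0 0] scalar[of k] by (simp add: mscale_apply mid_def)
  qed
  have sym: "pcompose (P 0 0) [:-2, -1:] = P 0 0"
  proof (rule poly_eqI_nat_tail)
    fix k
    have "poly (P 0 0) (of_nat k) = poly (P (Suc k) (Suc k)) (of_nat k)" by (simp add: diag[of "Suc k"])
    also have "\<dots> = poly (P 0 0) (- of_nat k - 2)"
      by (simp add: P_def poly_sum poly_verma_entry verma_entry_reflect)
    also have "- of_nat k - 2 = poly [:-2, -1:] (of_nat k :: complex)"
      by simp
    finally show "poly (pcompose (P 0 0) [:-2, -1:]) (of_nat k) = poly (P 0 0) (of_nat k)"
      by (simp add: poly_pcompose)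
  qed
  have "poly (P 0 0) (- 2 - x) = poly (P 0 0) x" for x
  proof -
    have "poly [:-2, -1:] x = - 2 - x" by simp
    then show ?thesis by (metis poly_pcompose sym)
  qed
  then obtain q where q: "\<And>x. poly (P 0 0) x = poly q (x / 2 + x\<^sup>2 / 4)"
    using symmetric_poly_casimir by blast
  have "U k = mscale (poly q (casimir_value k)) (mid (Suc k))" for k
    using scalar[of k] entry[of k 0 0] q[of "of_nat k"] by (simp add: casimir_value_def)
  then show ?thesis
    unfolding acts_by_casimir_poly_def by blast
qed

section \<open>The generating function\<close>

lemma ws_rep_Kmn_word_combination:
  "ws_rep k (Kmn m n) = (\<Sum>\<sigma>\<in>PiE {0..<m + n} (\<lambda>_. {0, 1, 2}).
     mscale (\<Prod>x\<leftarrow>rev [0..<m] @ rev [m..<m + n]. dual_coeff (\<sigma> x))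
       (mat_prod k (map (gen k) (map \<sigma> ([0..<m] @ [m..<m + n])
          @ map (\<lambda>x. dual_index (\<sigma> x)) (rev [0..<m] @ rev [m..<m + n])))))"
proof -
  have factor: "mat_prod k (map (\<lambda>x. gen k (\<sigma> x)) xs @ map (\<lambda>x. dualgen k (\<sigma> x)) ys)
      = mscale (\<Prod>x\<leftarrow>ys. dual_coeff (\<sigma> x))
          (mat_prod k (map (gen k) (map \<sigma> xs @ map (\<lambda>x. dual_index (\<sigma> x)) ys)))" for \<sigma> xs ys
  proof -
    have "mat_prod k (map (\<lambda>x. gen k (\<sigma> x)) xs @ map (\<lambda>x. dualgen k (\<sigma> x)) ys)
        = kmul k (mat_prod k (map (\<lambda>x. gen k (\<sigma> x)) xs)) (mscale (\<Prod>x\<leftarrow>ys. dual_coeff (\<sigma> x))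
            (mat_prod k (map (\<lambda>x. gen k (dual_index (\<sigma> x))) ys)))"
      by (subst mat_prod_append) (auto simp: endo_scale endo_gen dualgen_eq mat_prod_scale)
    also have "\<dots> = mscale (\<Prod>x\<leftarrow>ys. dual_coeff (\<sigma> x))
        (mat_prod k (map (gen k) (map \<sigma> xs @ map (\<lambda>x. dual_index (\<sigma> x)) ys)))"
      by (simp only: map_append map_map o_def mmul_scale_right, subst mat_prod_append) (auto simp: endo_gen)
    finally show ?thesis .
  qed
  show ?thesis unfolding ws_rep_Kmn_expand factor ..
qed

lemma ws_rep_Kmn_casimir_poly: "acts_by_casimir_poly (\<lambda>k. ws_rep k (Kmn m n))"
  by (rule central_word_combination[OF ws_rep_Kmn_word_combination])
     (simp_all add: bracket_ws_rep_Kmn)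

lemma acts_by_casimir_poly_add:
  assumes "acts_by_casimir_poly U" and "acts_by_casimir_poly V"
  shows "acts_by_casimir_poly (\<lambda>k. U k + V k)"
proof -
  obtain p q where "\<And>k. U k = mscale (poly p (casimir_value k)) (mid (Suc k))"
    and "\<And>k. V k = mscale (poly q (casimir_value k)) (mid (Suc k))"
    using assms unfolding acts_by_casimir_poly_def by blast
  then show ?thesis
    unfolding acts_by_casimir_poly_def by (auto intro!: exI[of _ "p + q"] simp: mat.scale_left_distrib)
qed

lemma acts_by_casimir_poly_scale:
  assumes "acts_by_casimir_poly U"
  shows "acts_by_casimir_poly (\<lambda>k. mscale a (U k))"
proof -
  obtain p where "\<And>k. U k = mscale (poly p (casimir_value k)) (mid (Suc k))"
    using assms unfolding acts_by_casimir_poly_def by blast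
  then show ?thesis
    unfolding acts_by_casimir_poly_def by (auto intro!: exI[of _ "smult a p"])
qed

lemma acts_by_casimir_poly_casimir:
  assumes "acts_by_casimir_poly U"
  shows "acts_by_casimir_poly (\<lambda>k. mscale (casimir_value k) (U k))"
proof -
  obtain p where "\<And>k. U k = mscale (poly p (casimir_value k)) (mid (Suc k))"
    using assms unfolding acts_by_casimir_poly_def by blast
  then show ?thesis
    unfolding acts_by_casimir_poly_def by (auto intro!: exI[of _ "[:0, 1:] * p"])
qed

lemma acts_by_casimir_poly_sum:
  "(\<And>i. i \<in> I \<Longrightarrow> acts_by_casimir_poly (U i)) \<Longrightarrow> acts_by_casimir_poly (\<lambda>k. \<Sum>i\<in>I. U i k)"
proof (induction I rule: infinite_finite_induct)
  case (insert i I)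
  then show ?case by (simp add: acts_by_casimir_poly_add)
qed (auto simp: acts_by_casimir_poly_def intro: exI[of _ 0])

text \<open>For \<open>r = 0\<close> this is \<open>ws_rep k (Kmn m s)\<close>.\<close>

definition kmn_moment :: "nat \<Rightarrow> nat \<Rightarrow> nat \<Rightarrow> nat \<Rightarrow> mat" where
  "kmn_moment m r s k = (\<Sum>\<alpha>\<in>PiE {0..<m} (\<lambda>_. {0, 1, 2}). kmul k (gen_word k \<alpha> [0..<m])
      ((chord_map k ^^ s) ((ad_casimir k ^^ r) (dual_word k \<alpha> [0..<m]))))"

lemma kmn_moment_Suc:
  "kmn_moment m (Suc r) s k
    = mscale (2 * casimir_value k) (kmn_moment m r s k) - mscale 2 (kmn_moment m r (Suc s) k)"
proof -
  note lin = linear_mat_funpow[OF linear_chord_map]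
  have step: "(chord_map k ^^ s) ((ad_casimir k ^^ Suc r) Y)
      = mscale (2 * casimir_value k) ((chord_map k ^^ s) ((ad_casimir k ^^ r) Y))
        - mscale 2 ((chord_map k ^^ Suc s) ((ad_casimir k ^^ r) Y))"
    if "endo k Y" for Y
  proof -
    define Z where "Z = (ad_casimir k ^^ r) Y"
    have "endo k Z" unfolding Z_def using that by (induction r) (simp_all add: endo_ad_casimir)
    then have "ad_casimir k Z = mscale (2 * casimir_value k) Z - mscale 2 (chord_map k Z)"
      by (simp add: chord_map_eq fun_eq_iff mscale_def)
    moreover have "(ad_casimir k ^^ Suc r) Y = ad_casimir k Z" by (simp add: Z_def)
    moreover have "(chord_map k ^^ Suc s) Z = (chord_map k ^^ s) (chord_map k Z)"
      by (simp only: funpow_Suc_right o_apply)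
    ultimately show ?thesis
      by (simp add: Z_def[symmetric] module_hom.diff[OF lin] module_hom.scale[OF lin])
  qed
  show ?thesis
    unfolding kmn_moment_def step[OF endo_dual_word]
    by (simp add: mmul_linear mat.scale_sum_right sum_subtractf del: funpow.simps)
qed

lemma kmn_moment_casimir_poly: "acts_by_casimir_poly (kmn_moment m r s)"
proof (induction r arbitrary: s)
  case 0
  have "kmn_moment m 0 s = (\<lambda>k. ws_rep k (Kmn m s))"
    by (simp add: fun_eq_iff kmn_moment_def ws_rep_Kmn)
  then show ?case by (simp add: ws_rep_Kmn_casimir_poly)
next
  case (Suc r)
  have "kmn_moment m (Suc r) s
      = (\<lambda>k. mscale (casimir_value k) (mscale 2 (kmn_moment m r s k)) + mscale (-2) (kmn_moment m r (Suc s) k))"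
    by (rule ext) (simp add: kmn_moment_Suc mat.scale_minus_left mult.commute)
  then show ?case
    by (simp only:)
       (intro acts_by_casimir_poly_add acts_by_casimir_poly_casimir acts_by_casimir_poly_scale Suc)
qed

definition spectral_part :: "nat \<Rightarrow> nat \<Rightarrow> nat \<Rightarrow> mat" where
  "spectral_part m i k = (\<Sum>\<alpha>\<in>PiE {0..<m} (\<lambda>_. {0, 1, 2}).
      kmul k (gen_word k \<alpha> [0..<m]) (spectral_component k m i (dual_word k \<alpha> [0..<m])))"

lemma spectral_part_casimir_poly: "acts_by_casimir_poly (spectral_part m i)"
proof -
  let ?L = "lagrange_basis adj_eig m i"
  have "spectral_part m i = (\<lambda>k. \<Sum>r\<le>degree ?L. mscale (coeff ?L r) (kmn_moment m r 0 k))"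
    by (simp add: fun_eq_iff spectral_part_def spectral_component_def op_poly_def kmn_moment_def
        mmul_sum_right mmul_scale_right mat.scale_sum_right sum.swap[of _ "{..degree ?L}"])
  then show ?thesis
    by (simp only:)
       (intro acts_by_casimir_poly_sum acts_by_casimir_poly_scale kmn_moment_casimir_poly)
qed

lemma ws_rep_Kmn_spectral:
  "ws_rep k (Kmn m n) = (\<Sum>i\<le>m. mscale ((casimir_value k - adj_eig i / 2) ^ n) (spectral_part m i k))"
proof -
  have dual_in: "dual_word k \<alpha> [0..<m] \<in> word_space k m" for \<alpha>
    using dual_word_in_word_space[of k \<alpha> "[0..<m]"] by simp
  have "ws_rep k (Kmn m n) = (\<Sum>\<alpha>\<in>PiE {0..<m} (\<lambda>_. {0, 1, 2}). kmul k (gen_word k \<alpha> [0..<m])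
      (\<Sum>i\<le>m. mscale ((casimir_value k - adj_eig i / 2) ^ n) (spectral_component k m i (dual_word k \<alpha> [0..<m]))))"
    by (simp add: ws_rep_Kmn chord_map_funpow_spectral[OF dual_in])
  then show ?thesis
    by (simp add: spectral_part_def mmul_sum_right mmul_scale_right mat.scale_sum_right
        sum.swap[of _ "{..m}"])
qed

lemma cas_eq_casimir_value: "cas k = casimir_value k"
proof -
  have "ws_rep k (Kmn 1 0) = (\<Sum>b\<in>{0, 1, 2}. kmul k (gen k b) (dualgen k b))"
    by (simp add: ws_rep_Kmn sum_PiE_insert[of 0 "{}", simplified] gen_word_def dual_word_def
        mmul_mid endo_gen endo_dualgen)
  also have "\<dots> = chord_map k (mid (Suc k))"
    by (simp add: chord_map_def mid_mmul endo_dualgen lessThan_nat_numeral insert_commute)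
  also have "\<dots> = mscale (casimir_value k) (mid (Suc k))"
    by (simp add: chord_map_eq endo_mid ad_casimir_def bracket_mid endo_E endo_F endo_H bracket_linear)
  finally show ?thesis
    by (simp add: cas_def Kmn_def mscale_def mid_def)
qed

lemma inj_casimir_value: "inj casimir_value"
proof (rule injI)
  fix k l assume "casimir_value k = casimir_value l"
  moreover have "4 * casimir_value j = of_nat (j * (j + 2))" for j
    by (simp add: casimir_value_def power2_eq_square algebra_simps)
  ultimately have "(of_nat (k * (k + 2)) :: complex) = of_nat (l * (l + 2))"
    by metis
  then have "k * (k + 2) = l * (l + 2)" by (simp only: of_nat_eq_iff)
  moreover have "strict_mono (\<lambda>k::nat. k * (k + 2))"
  proof (rule strict_monoI)
    fix x y :: nat assume "x < y"
    then show "x * (x + 2) < y * (y + 2)" by (intro mult_strict_mono) auto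
  qed
  ultimately show "k = l" by (metis strict_mono_eq)
qed

lemma wsl2_eqI:
  assumes "\<And>k. ws_rep k w = mscale (poly p (casimir_value k)) (mid (Suc k))"
  shows "wsl2 w = p"
  unfolding wsl2_def
proof (rule the_equality)
  show "\<forall>k. ws_rep k w = (\<lambda>i j. if i = j \<and> i \<le> k then poly p (cas k) else 0)"
    using assms by (auto simp: fun_eq_iff mscale_def mid_def cas_eq_casimir_value)
next
  fix p' assume p': "\<forall>k. ws_rep k w = (\<lambda>i j. if i = j \<and> i \<le> k then poly p' (cas k) else 0)"
  show "p' = p"
  proof (rule poly_eq_if_infinite_agree)
    show "infinite (range casimir_value)"
      using inj_casimir_value finite_imageD infinite_UNIV_nat by blast
  next
    fix x assume "x \<in> range casimir_value"
    then obtain k where x: "x = casimir_value k" by auto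
    have "ws_rep k w 0 0 = poly p' (cas k)" using p' by simp
    moreover have "ws_rep k w 0 0 = poly p (casimir_value k)"
      using assms[of k] by (simp add: mscale_def mid_def)
    ultimately show "poly p' x = poly p x"
      by (simp add: x cas_eq_casimir_value)
  qed
qed

theorem mainTheorem5:
  fixes m :: nat
  shows "\<exists>a :: nat \<Rightarrow> complex poly. \<forall>n :: nat.
           wsl2 (Kmn m n) = (\<Sum>i\<le>m. a i * [: - (of_nat (i * (i + 1)) / 2), 1 :] ^ n)"
proof -
  obtain a where a: "\<And>i k. spectral_part m i k = mscale (poly (a i) (casimir_value k)) (mid (Suc k))"
    using spectral_part_casimir_poly[of m] unfolding acts_by_casimir_poly_def by metis
  have "wsl2 (Kmn m n) = (\<Sum>i\<le>m. a i * [: - (adj_eig i / 2), 1 :] ^ n)" for n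
    by (rule wsl2_eqI)
       (simp add: ws_rep_Kmn_spectral a poly_sum mat.scale_sum_left mult.commute)
  then show ?thesis
    by (auto simp: adj_eig_def)
qed

end
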